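(* Let $S$ be an instance of SCS-RC and let $T$ be the set of strings computed by \textsf{MGREEDY-RC} on input $S$. Then $\mathrm{OPT}(T) \le \mathrm{OPT}(S) + w(\mathrm{CYC}(G_S)) \le 2\,\mathrm{OPT}(S)$.
   Context: Alphabet $\Sigma=\{\texttt a,\texttt t,\texttt g,\texttt c\}$ with complement $\bar{\texttt a}=\texttt t$, $\bar{\texttt t}=\texttt a$, $\bar{\texttt g}=\texttt c$, $\bar{\texttt c}=\texttt g$; the reverse complement of $s=b_1\cdots b_n$ is $\bar{s}^R=\bar{b_n}\cdots\bar{b_1}$, and $\bar S^R=\{\bar s^R: s\in S\}$. An instance of SCS-RC is a finite set $S=\{s_1,\dots,s_m\}$ of strings over $\Sigma$ such that no string of $S\cup\bar S^R$ is a substring of another; for a finite set $U$ of strings, $\mathrm{OPT}(U)$ is the minimum length of a string containing, for each $u\in U$, $u$ or $\bar u^R$ as a substring. For strings $x,y$, $\mathrm{ov}(x,y)$ is the length of the longest $v$ with $x=uv$, $y=vw$ for nonempty $u,w$; $\mathrm{pref}(x,y)=u$; $\mathrm{dist}(x,y)=|x|-\mathrm{ov}(x,y)$; $\langle x,y\rangle=\mathrm{pref}(x,y)\,y$. The distance graph $G_S$ is the complete directed graph (with loops) on $S\cup\bar S^R$ with edge weights $\mathrm{dist}(x,y)$; a cycle $x_1,\dots,x_r,x_1$ (distinct vertices) has weight $\sum_{i}\mathrm{dist}(x_i,x_{i+1})$ with $x_{r+1}=x_1$; a cycle cover is a set of vertex-disjoint cycles containing exactly one of $s_i,\bar{s_i}^R$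 for each $i$; $w(\mathrm{CYC}(G_S))$ denotes the minimum total weight of a cycle cover of $G_S$. \textsf{MGREEDY-RC} on $S$: set $T=\emptyset$; while $S\ne\emptyset$: among pairs $(x,y)\in (S\cup\bar S^R)^2$ with $x=y$, or with $x\ne y$ and $\bar x^R\ne y$, pick one maximizing $\mathrm{ov}(x,y)$ (ties arbitrary); if $x=y$, remove $x,\bar x^R$ from $S$ and add $x$ to $T$; otherwise remove $x,\bar x^R,y,\bar y^R$ from $S$ and add $\langle x,y\rangle$ to $S$. The resulting set is $T$. *)

theory Defs
  imports Main "HOL-Library.Sublist"
begin

datatype base = Ba | Bt | Bg | Bc

fun comp :: "base \<Rightarrow> base" where
  "comp Ba = Bt" | "comp Bt = Ba" | "comp Bg = Bc" | "comp Bc = Bg"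

type_synonym dna = "base list"

definition rc :: "dna \<Rightarrow> dna" where
  "rc s = rev (map comp s)"

definition verts :: "dna set \<Rightarrow> dna set" where
  "verts S = S \<union> rc ` S"

definition scs_rc_instance :: "dna set \<Rightarrow> bool" where
  "scs_rc_instance S \<longleftrightarrow> finite S \<and>
     (\<forall>x\<in>verts S. \<forall>y\<in>verts S. x \<noteq> y \<longrightarrow> \<not> sublist x y)"

text \<open>ov x y: length of the longest v with x = u v, y = v w, u and w nonempty.
  (0 is inserted only to make the value total for empty strings.)\<close>
definition ov :: "dna \<Rightarrow> dna \<Rightarrow> nat" where
  "ov x y = Max (insert 0 {k. k < length x \<and> k < length y \<and>
                               drop (length x - k) x = take k y})"

definition pref :: "dna \<Rightarrow> dna \<Rightarrow> dna" where
  "pref x y = take (length x - ov x y) x"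

definition dist :: "dna \<Rightarrow> dna \<Rightarrow> nat" where
  "dist x y = length x - ov x y"

definition merge :: "dna \<Rightarrow> dna \<Rightarrow> dna" where
  "merge x y = pref x y @ y"

definition covers_rc :: "dna set \<Rightarrow> dna \<Rightarrow> bool" where
  "covers_rc U s \<longleftrightarrow> (\<forall>u\<in>U. sublist u s \<or> sublist (rc u) s)"

definition OPT :: "dna set \<Rightarrow> nat" where
  "OPT U = (LEAST n. \<exists>s. length s = n \<and> covers_rc U s)"

text \<open>A cycle x_1,...,x_r,x_1 is represented by the nonempty list [x_1,...,x_r].\<close>
definition cycle_weight :: "dna list \<Rightarrow> nat" where
  "cycle_weight xs = (\<Sum>i<length xs. dist (xs ! i) (xs ! ((i + 1) mod length xs)))"

definition is_cycle_cover :: "dna set \<Rightarrow> dna list list \<Rightarrow> bool" where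
  "is_cycle_cover S C \<longleftrightarrow>
     (\<forall>c\<in>set C. c \<noteq> []) \<and>
     distinct (concat C) \<and>
     set (concat C) \<subseteq> verts S \<and>
     (\<forall>s\<in>S. (s \<in> set (concat C) \<or> rc s \<in> set (concat C)) \<and>
             (s \<noteq> rc s \<longrightarrow> \<not> (s \<in> set (concat C) \<and> rc s \<in> set (concat C))))"

definition cover_weight :: "dna list list \<Rightarrow> nat" where
  "cover_weight C = (\<Sum>c\<leftarrow>C. cycle_weight c)"

definition wCYC :: "dna set \<Rightarrow> nat" where
  "wCYC S = (LEAST w. \<exists>C. is_cycle_cover S C \<and> cover_weight C = w)"

definition cand :: "dna set \<Rightarrow> (dna \<times> dna) set" where
  "cand S = {(x, y). x \<in> verts S \<and> y \<in> verts S \<and> (x = y \<or> (x \<noteq> y \<and> rc x \<noteq> y))}"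

definition max_pair :: "dna set \<Rightarrow> dna \<Rightarrow> dna \<Rightarrow> bool" where
  "max_pair S x y \<longleftrightarrow> (x, y) \<in> cand S \<and> (\<forall>(x', y')\<in>cand S. ov x' y' \<le> ov x y)"

text \<open>mgreedy_run S T R: starting from current set S and output set T, some run of
  the algorithm (with arbitrary tie-breaking) terminates with output R.\<close>
inductive mgreedy_run :: "dna set \<Rightarrow> dna set \<Rightarrow> dna set \<Rightarrow> bool" where
  stop: "mgreedy_run {} T T"
| loop: "\<lbrakk> S \<noteq> {}; max_pair S x x;
           mgreedy_run (S - {x, rc x}) (insert x T) R \<rbrakk> \<Longrightarrow> mgreedy_run S T R"
| join: "\<lbrakk> S \<noteq> {}; max_pair S x y; x \<noteq> y;
           mgreedy_run ((S - {x, rc x, y, rc y}) \<union> {merge x y}) T R \<rbrakk> \<Longrightarrow> mgreedy_run S T R"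

definition mgreedy_rc :: "dna set \<Rightarrow> dna set \<Rightarrow> bool" where
  "mgreedy_rc S T \<longleftrightarrow> mgreedy_run S {} T"

end

theory Submission
  imports Defs "HOL-Library.Multiset"
begin

text \<open>The bound \<open>wCYC S \<le> OPT S\<close> holds since listing one string of each pair \<open>{s, rc s}\<close> in
  the order of its occurrences in a shortest superstring gives a single cycle whose weight is at
  most the length of that superstring.

  For \<open>OPT T \<le> OPT S + wCYC S\<close>, MGREEDY-RC maintains the invariant that every current string
  \<open>X\<close> starts with an input string \<open>v\<close> that is longer than the self-overlap of \<open>X\<close> and occurs in
  no current string other than \<open>X\<close> and \<open>rc X\<close>. Hence \<open>merge t v\<close> contains an output \<open>t\<close> and is only \<open>dist t t\<close>
  longer than \<open>v\<close>; inserting these extra letters after occurrences of the anchors in a shortest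
  superstring of \<open>S\<close> gives a superstring of \<open>T\<close>. Finally the sum of the \<open>dist t t\<close> is at most
  \<open>wCYC S\<close>: by the Monge inequality for overlaps, when the greedy choice is a pair \<open>(X, X)\<close>
  some optimal cycle cover contains the loop at \<open>X\<close>, and when it is \<open>(X, Y)\<close> some optimal
  cover contains the edge \<open>(X, Y)\<close>, whose contraction is a cover of the new instance that is
  no heavier.\<close>

section \<open>Reverse complements and overlaps\<close>

lemma rc_rc [simp]: "rc (rc x) = x"
proof -
  have "comp (comp b) = b" for b
    by (cases b) simp_all
  then show ?thesis
    by (simp add: rc_def rev_map comp_def)
qed

lemma rc_eq_iff [simp]: "rc x = rc y \<longleftrightarrow> x = y"
  by (metis rc_rc)

lemma length_rc [simp]: "length (rc x) = length x"
  by (simp add: rc_def)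

lemma rc_append [simp]: "rc (x @ y) = rc y @ rc x"
  by (simp add: rc_def)

lemma rc_take: "rc (take k y) = drop (length y - k) (rc y)"
  unfolding rc_def by (metis length_map rev_take take_map)

lemma rc_drop: "rc (drop k y) = take (length y - k) (rc y)"
  unfolding rc_def by (metis length_map rev_drop drop_map)

lemma sublist_rc: "sublist x y \<Longrightarrow> sublist (rc x) (rc y)"
  by (auto simp: sublist_def) (metis append_assoc rc_append)

lemma prefix_imp_suffix_rc: "prefix x y \<Longrightarrow> suffix (rc x) (rc y)"
  by (auto simp: prefix_def suffix_def)

lemma suffix_imp_prefix_rc: "suffix x y \<Longrightarrow> prefix (rc x) (rc y)"
  by (auto simp: prefix_def suffix_def)

lemma rc_in_verts: "x \<in> verts S \<Longrightarrow> rc x \<in> verts S"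
  by (auto simp: verts_def)

definition is_overlap :: "dna \<Rightarrow> dna \<Rightarrow> nat \<Rightarrow> bool" where
  "is_overlap x y k \<longleftrightarrow> k < length x \<and> k < length y \<and> drop (length x - k) x = take k y"

lemma ov_eq_Max: "ov x y = Max (insert 0 {k. is_overlap x y k})"
  by (simp add: ov_def is_overlap_def)

lemma finite_overlaps: "finite {k. is_overlap x y k}"
  by (rule finite_subset[of _ "{..<length x}"]) (auto simp: is_overlap_def)

lemma ov_maximal: "is_overlap x y k \<Longrightarrow> k \<le> ov x y"
  unfolding ov_eq_Max using finite_overlaps by (intro Max_ge) auto

lemma ov_cases: "ov x y = 0 \<or> is_overlap x y (ov x y)"
proof -
  have "ov x y \<in> insert 0 {k. is_overlap x y k}"
    unfolding ov_eq_Max using finite_overlaps by (intro Max_in) auto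
  then show ?thesis by auto
qed

lemma is_overlap_ov: "ov x y \<noteq> 0 \<Longrightarrow> is_overlap x y (ov x y)"
  by (metis ov_cases)

lemma ov_le_length1: "ov x y \<le> length x"
  using ov_cases[of x y] by (auto simp: is_overlap_def)

lemma ov_le_length2: "ov x y \<le> length y"
  using ov_cases[of x y] by (auto simp: is_overlap_def)

lemma ov_less_length1: "x \<noteq> [] \<Longrightarrow> ov x y < length x"
  using ov_cases[of x y] by (auto simp: is_overlap_def)

lemma ov_less_length2: "y \<noteq> [] \<Longrightarrow> ov x y < length y"
  using ov_cases[of x y] by (auto simp: is_overlap_def)

lemma drop_ov_eq_take_ov: "drop (length x - ov x y) x = take (ov x y) y"
  using ov_cases[of x y] by (auto simp: is_overlap_def)

lemma nth_overlap: "is_overlap x y k \<Longrightarrow> j < k \<Longrightarrow> x ! (length x - k + j) = y ! j"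
proof -
  assume p: "is_overlap x y k" and j: "j < k"
  have "x ! (length x - k + j) = drop (length x - k) x ! j"
    by simp
  also have "\<dots> = y ! j"
    using p j by (simp add: is_overlap_def)
  finally show ?thesis .
qed

lemma is_overlap_rc: "is_overlap (rc y) (rc x) k \<longleftrightarrow> is_overlap x y k"
proof -
  have "drop (length y - k) (rc y) = rc (take k y)"
    by (simp add: rc_take)
  moreover have "take k (rc x) = rc (drop (length x - k) x)"
    by (cases "k \<le> length x") (simp_all add: rc_drop)
  ultimately show ?thesis
    unfolding is_overlap_def by auto
qed

lemma ov_rc: "ov (rc y) (rc x) = ov x y"
  unfolding ov_eq_Max is_overlap_rc ..

lemma dist_add_ov: "dist x y + ov x y = length x"
  using ov_le_length1[of x y] by (simp add: dist_def)

lemma merge_eq_take_append: "merge x y = take (length x - ov x y) x @ y"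
  by (simp add: merge_def pref_def)

lemma merge_eq_append_drop: "merge x y = x @ drop (ov x y) y"
proof -
  have "take (length x - ov x y) x @ y
      = (take (length x - ov x y) x @ take (ov x y) y) @ drop (ov x y) y"
    by simp
  also have "take (length x - ov x y) x @ take (ov x y) y = x"
    by (metis append_take_drop_id drop_ov_eq_take_ov)
  finally show ?thesis
    by (simp add: merge_eq_take_append)
qed

lemma length_merge: "length (merge x y) = length x + length y - ov x y"
  using ov_le_length2[of x y] by (simp add: merge_eq_append_drop)

lemma prefix_merge: "prefix x (merge x y)"
  by (simp add: merge_eq_append_drop)

lemma suffix_merge: "suffix y (merge x y)"
  by (auto simp: merge_eq_take_append suffix_def)

lemma rc_merge: "rc (merge x y) = merge (rc y) (rc x)"
proof -
  have "rc (merge x y) = take (length y - ov x y) (rc y) @ rc x"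
    by (simp add: merge_eq_append_drop rc_drop)
  then show ?thesis
    by (simp add: merge_eq_take_append ov_rc)
qed

text \<open>The last \<open>A + B - C\<close> letters of \<open>x'\<close> are the letters of \<open>y\<close> from position \<open>C - A\<close> on,
  which in turn are the first letters of the length-\<open>A\<close> suffix of \<open>x\<close>, that is, of \<open>y'\<close>.\<close>
lemma is_overlap_crossing:
  assumes pA: "is_overlap x y' A" and pB: "is_overlap x' y B" and pC: "is_overlap x y C"
    and ABC: "C < A + B" "A \<le> C" "B \<le> C"
  shows "is_overlap x' y' (A + B - C)"
proof -
  define K where "K = A + B - C"
  have KA: "K \<le> A" and KB: "K \<le> B"
    using ABC unfolding K_def by auto
  have lx': "B < length x'" and lx: "C < length x"
    using pB pC by (auto simp: is_overlap_def)
  have "drop (length x' - K) x' = take K y'"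
  proof (rule nth_equalityI)
    show "length (drop (length x' - K) x') = length (take K y')"
      using pA pB KA KB by (auto simp: is_overlap_def)
  next
    fix i assume "i < length (drop (length x' - K) x')"
    then have i: "i < K"
      using KB lx' by simp
    have "drop (length x' - K) x' ! i = x' ! (length x' - B + (B - K + i))"
      using KB lx' by (simp add: add.assoc)
    also have "\<dots> = y ! (C - A + i)"
      using nth_overlap[OF pB, of "B - K + i"] i KB ABC by (simp add: K_def)
    also have "\<dots> = x ! (length x - A + i)"
      using nth_overlap[OF pC, of "C - A + i"] i KA ABC lx by simp
    also have "\<dots> = take K y' ! i"
      using nth_overlap[OF pA, of i] i KA by simp
    finally show "drop (length x' - K) x' ! i = take K y' ! i" .
  qed
  then show ?thesis
    using pA pB KA KB by (auto simp: is_overlap_def K_def)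
qed

lemma ov_monge:
  assumes xy': "ov x y' \<le> ov x y" and x'y: "ov x' y \<le> ov x y"
  shows "ov x y' + ov x' y \<le> ov x y + ov x' y'"
proof (cases "ov x y' = 0 \<or> ov x' y = 0 \<or> ov x y' + ov x' y \<le> ov x y")
  case False
  then have "is_overlap x y' (ov x y')" "is_overlap x' y (ov x' y)" "is_overlap x y (ov x y)"
    using xy' by (auto intro: is_overlap_ov)
  then have "is_overlap x' y' (ov x y' + ov x' y - ov x y)"
    using False xy' x'y by (intro is_overlap_crossing) auto
  then show ?thesis
    using ov_maximal False by fastforce
qed (use xy' x'y in auto)

lemma ov_mono_suffix: "suffix y y' \<Longrightarrow> ov y z \<le> ov y' z"
proof (cases "ov y z = 0")
  case False
  assume "suffix y y'"
  then obtain w where "y' = w @ y"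
    by (auto simp: suffix_def)
  then have "is_overlap y' z (ov y z)"
    using is_overlap_ov[OF False] by (auto simp: is_overlap_def)
  then show ?thesis
    by (rule ov_maximal)
qed simp

lemma ov_mono_prefix: "prefix y y' \<Longrightarrow> ov z y \<le> ov z y'"
proof (cases "ov z y = 0")
  case False
  assume "prefix y y'"
  then obtain w where "y' = y @ w"
    by (auto simp: prefix_def)
  then have "is_overlap z y' (ov z y)"
    using is_overlap_ov[OF False] by (auto simp: is_overlap_def)
  then show ?thesis
    by (rule ov_maximal)
qed simp

lemma ov_le_ov_merge_self: "ov y x \<le> ov (merge x y) (merge x y)"
proof (cases "ov y x = 0")
  case False
  define k where "k = ov y x"
  have p: "is_overlap y x k"
    using False is_overlap_ov k_def by blast
  obtain w where m1: "merge x y = x @ w"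
    using prefix_merge[of x y] by (auto simp: prefix_def)
  obtain w' where m2: "merge x y = w' @ y"
    using suffix_merge[of y x] by (auto simp: suffix_def)
  have "is_overlap (merge x y) (merge x y) k"
    unfolding is_overlap_def
  proof (intro conjI)
    show "k < length (merge x y)" "k < length (merge x y)"
      using p m1 by (auto simp: is_overlap_def)
    have "drop (length (merge x y) - k) (merge x y) = drop (length y - k) y"
      using p m2 by (auto simp: is_overlap_def)
    also have "\<dots> = take k x"
      using p by (simp add: is_overlap_def)
    also have "\<dots> = take k (merge x y)"
      using p m1 by (auto simp: is_overlap_def)
    finally show "drop (length (merge x y) - k) (merge x y) = take k (merge x y)" .
  qed
  then show ?thesis
    unfolding k_def by (rule ov_maximal)
qed simp

section \<open>Occurrences and substring-free sets\<close>

definition occurs_at :: "dna \<Rightarrow> dna \<Rightarrow> nat \<Rightarrow> bool" where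
  "occurs_at z m q \<longleftrightarrow> q + length z \<le> length m \<and> take (length z) (drop q m) = z"

lemma sublist_iff_occurs_at: "sublist z m \<longleftrightarrow> (\<exists>q. occurs_at z m q)"
proof
  assume "sublist z m"
  then obtain p s where "m = p @ z @ s"
    by (auto simp: sublist_def)
  then have "occurs_at z m (length p)"
    by (simp add: occurs_at_def)
  then show "\<exists>q. occurs_at z m q" ..
next
  assume "\<exists>q. occurs_at z m q"
  then obtain q where "take (length z) (drop q m) = z"
    by (auto simp: occurs_at_def)
  then show "sublist z m"
    by (metis sublist_drop sublist_order.dual_order.trans sublist_take)
qed

lemma occurs_at_append_cases:
  assumes "occurs_at z (a @ b) q"
  obtains "q + length z \<le> length a" "sublist z a"
    | "length a \<le> q" "sublist z b"
    | "q < length a" "length a < q + length z" "drop q a = take (length a - q) z"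
proof -
  have L: "q + length z \<le> length a + length b" and E: "take (length z) (drop q (a @ b)) = z"
    using assms by (auto simp: occurs_at_def)
  consider "q + length z \<le> length a" | "length a \<le> q" | "q < length a" "length a < q + length z"
    by linarith
  then show thesis
  proof cases
    case 1
    then have "occurs_at z a q"
      using E by (simp add: occurs_at_def)
    then show thesis
      using that(1) 1 sublist_iff_occurs_at by blast
  next
    case 2
    then have "occurs_at z b (q - length a)"
      using E L by (simp add: occurs_at_def)
    then show thesis
      using that(2) 2 sublist_iff_occurs_at by blast
  next
    case 3
    have "take (length a - q) z = take (length a - q) (take (length z) (drop q (a @ b)))"
      using E by simp
    also have "\<dots> = drop q a"
      using 3 by (simp add: min_def)
    finally show thesis
      using that(3) 3 by simp
  qed
qed

lemma occurs_at_self_overlap: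
  assumes p: "is_overlap m m L" and Y: "suffix Y m" and LY: "length Y \<le> L"
  shows "occurs_at Y m (L - length Y)"
proof -
  have Lm: "L < length m"
    using p by (simp add: is_overlap_def)
  have "Y = drop (length m - length Y) m"
    using Y by (auto simp: suffix_def)
  also have "\<dots> = drop (L - length Y) (drop (length m - L) m)"
    using LY Lm by simp
  also have "drop (length m - L) m = take L m"
    using p by (simp add: is_overlap_def)
  finally have "take (length Y) (drop (L - length Y) m) = Y"
    using LY by (simp add: drop_take)
  then show ?thesis
    using Lm LY by (simp add: occurs_at_def)
qed

lemma sublist_merge_cases:
  assumes "sublist z (merge x y)"
  shows "sublist z x \<or> sublist z y \<or>
    (\<exists>k. ov x y < k \<and> k \<le> length x \<and> k < length z \<and> drop (length x - k) x = take k z)"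
proof -
  obtain q where o: "occurs_at z (merge x y) q"
    using assms sublist_iff_occurs_at by blast
  have lo: "ov x y \<le> length x"
    by (rule ov_le_length1)
  show ?thesis
  proof (cases "q < length x - ov x y")
    case False
    from o[unfolded merge_eq_take_append] show ?thesis
    proof (cases rule: occurs_at_append_cases)
      case 1
      then have "q + length z \<le> length x - ov x y"
        using lo by simp
      then have "length z = 0"
        using False by linarith
      then show ?thesis by simp
    next
      case 3
      then show ?thesis using False lo by simp
    qed simp
  next
    case True
    from o[unfolded merge_eq_append_drop] show ?thesis
    proof (cases rule: occurs_at_append_cases)
      case 3
      define k where "k = length x - q"
      have "ov x y < k" "k \<le> length x" "k < length z" "drop (length x - k) x = take k z"
        using 3 True by (auto simp: k_def)
      then show ?thesis by blast
    qed (use True in simp_all)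
  qed
qed

definition substring_free :: "dna set \<Rightarrow> bool" where
  "substring_free A \<longleftrightarrow> (\<forall>x\<in>A. \<forall>y\<in>A. x \<noteq> y \<longrightarrow> \<not> sublist x y)"

lemma substring_freeD: "substring_free A \<Longrightarrow> x \<in> A \<Longrightarrow> y \<in> A \<Longrightarrow> sublist x y \<Longrightarrow> x = y"
  by (auto simp: substring_free_def)

lemma substring_free_subset: "substring_free A \<Longrightarrow> B \<subseteq> A \<Longrightarrow> substring_free B"
  by (auto simp: substring_free_def)

lemma sublist_length_eq: "sublist x y \<Longrightarrow> length y \<le> length x \<Longrightarrow> x = y"
  by (auto simp: sublist_def)

lemma take_prefix_eq: "prefix v w \<Longrightarrow> k \<le> length v \<Longrightarrow> take k w = take k v"
  by (auto simp: prefix_def)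

lemma prefix_take_prefix: "prefix v w \<Longrightarrow> length v \<le> k \<Longrightarrow> prefix v (take k w)"
  by (auto simp: prefix_def)

section \<open>The invariant of MGREEDY-RC\<close>

lemma cand_iff: "(x, y) \<in> cand S \<longleftrightarrow> x \<in> verts S \<and> y \<in> verts S \<and> (x = y \<or> rc x \<noteq> y)"
  by (auto simp: cand_def)

lemma max_pairD: "max_pair S x y \<Longrightarrow> (x', y') \<in> cand S \<Longrightarrow> ov x' y' \<le> ov x y"
  by (auto simp: max_pair_def)

lemma max_pair_rc: "max_pair S x y \<Longrightarrow> max_pair S (rc y) (rc x)"
  unfolding max_pair_def cand_iff by (auto simp: ov_rc rc_in_verts)

text \<open>\<open>V\<close> is the vertex set of the original instance. An original string that a current
  string starts with is an anchor of it: the first input string merged into it.\<close>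
definition greedy_inv :: "dna set \<Rightarrow> dna set \<Rightarrow> bool" where
  "greedy_inv V S \<longleftrightarrow> finite S \<and> substring_free (verts S) \<and>
     (\<forall>X\<in>verts S. \<exists>v\<in>V. prefix v X) \<and>
     (\<forall>X\<in>verts S. \<forall>Z\<in>verts S. Z \<noteq> X \<longrightarrow> Z \<noteq> rc X \<longrightarrow>
        (\<forall>v\<in>V. prefix v X \<longrightarrow> \<not> sublist v Z)) \<and>
     (\<forall>X\<in>verts S. X \<noteq> [] \<longrightarrow> (\<forall>v\<in>V. prefix v X \<longrightarrow> ov X X < length v))"

definition anchored :: "dna set \<Rightarrow> dna \<Rightarrow> bool" where
  "anchored V t \<longleftrightarrow> (\<exists>v\<in>V. prefix v t \<and> (t \<noteq> [] \<longrightarrow> ov t t < length v))"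

lemma greedy_inv_finite: "greedy_inv V S \<Longrightarrow> finite S"
  by (simp add: greedy_inv_def)

lemma greedy_inv_substring_free: "greedy_inv V S \<Longrightarrow> substring_free (verts S)"
  by (simp add: greedy_inv_def)

lemma greedy_inv_anchor: "greedy_inv V S \<Longrightarrow> X \<in> verts S \<Longrightarrow> \<exists>v\<in>V. prefix v X"
  by (simp add: greedy_inv_def)

lemma greedy_inv_not_sublist:
  "greedy_inv V S \<Longrightarrow> X \<in> verts S \<Longrightarrow> Z \<in> verts S \<Longrightarrow> Z \<noteq> X \<Longrightarrow> Z \<noteq> rc X \<Longrightarrow>
    v \<in> V \<Longrightarrow> prefix v X \<Longrightarrow> \<not> sublist v Z"
  by (simp add: greedy_inv_def)

lemma greedy_inv_ov_self:
  "greedy_inv V S \<Longrightarrow> X \<in> verts S \<Longrightarrow> X \<noteq> [] \<Longrightarrow> v \<in> V \<Longrightarrow> prefix v X \<Longrightarrow> ov X X < length v"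
  by (simp add: greedy_inv_def)

lemma greedy_inv_anchored: "greedy_inv V S \<Longrightarrow> X \<in> verts S \<Longrightarrow> anchored V X"
  unfolding anchored_def using greedy_inv_anchor greedy_inv_ov_self by blast

lemma verts_Diff_subset: "verts (S - A) \<subseteq> verts S"
  by (auto simp: verts_def)

lemma greedy_inv_Diff: "greedy_inv V S \<Longrightarrow> greedy_inv V (S - A)"
  using verts_Diff_subset[of S A] unfolding greedy_inv_def
  by (intro conjI) (blast intro: substring_free_subset)+

lemma greedy_inv_init:
  assumes "finite S" "substring_free (verts S)"
  shows "greedy_inv (verts S) S"
proof -
  have anchor_eq: "v = X" if "v \<in> verts S" "X \<in> verts S" "prefix v X" for v X
    using assms(2) that by (meson prefix_imp_sublist substring_freeD)
  show ?thesis
    unfolding greedy_inv_def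
  proof (intro conjI ballI impI allI)
    fix X Z v
    assume "X \<in> verts S" "Z \<in> verts S" "Z \<noteq> X" "v \<in> verts S" "prefix v X"
    then show "\<not> sublist v Z"
      using anchor_eq assms(2) by (metis substring_freeD)
  next
    fix X v
    assume "X \<in> verts S" "X \<noteq> []" "v \<in> verts S" "prefix v X"
    then show "ov X X < length v"
      using anchor_eq ov_less_length1 by blast
  qed (use assms in auto)
qed

locale greedy_join =
  fixes V S X Y
  assumes substring_free_V: "substring_free V"
    and inv: "greedy_inv V S"
    and max_pair: "max_pair S X Y"
    and X_neq_Y: "X \<noteq> Y"
begin

lemma X_in: "X \<in> verts S" and Y_in: "Y \<in> verts S" and rc_X_neq_Y: "rc X \<noteq> Y"
  using max_pair X_neq_Y by (auto simp: max_pair_def cand_iff)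

lemma substring_free_verts: "substring_free (verts S)"
  using inv by (rule greedy_inv_substring_free)

lemma ov_le_ov_XY: "(a, b) \<in> cand S \<Longrightarrow> ov a b \<le> ov X Y"
  using max_pair by (rule max_pairD)

lemma Y_not_Nil: "Y \<noteq> []"
  using substring_freeD[OF substring_free_verts Y_in X_in] X_neq_Y by auto

lemma rc_join: "greedy_join V S (rc Y) (rc X)"
  using substring_free_V inv max_pair_rc[OF max_pair] X_neq_Y by unfold_locales auto

text \<open>An occurrence of \<open>v\<close> across the junction of \<open>merge X Y\<close> would give an overlap of \<open>X\<close>
  with \<open>W\<close> longer than \<open>ov X Y\<close>, contradicting the greedy choice.\<close>
lemma prefix_not_sublist_merge:
  assumes W: "W \<in> verts S" "W \<noteq> X" "W \<noteq> rc X" and v: "prefix v W"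
    and vX: "\<not> sublist v X" and vY: "\<not> sublist v Y"
  shows "\<not> sublist v (merge X Y)"
proof
  assume "sublist v (merge X Y)"
  then obtain k where k: "ov X Y < k" "k \<le> length X" "k < length v"
    "drop (length X - k) X = take k v"
    using sublist_merge_cases vX vY by blast
  have tk: "take k W = take k v"
    using take_prefix_eq[OF v] k(3) by simp
  show False
  proof (cases "k = length X")
    case True
    then have "prefix X W"
      using k(4) tk by (metis append_take_drop_id diff_self_eq_0 drop_0 prefixI)
    then show False
      using substring_freeD[OF substring_free_verts X_in W(1)] W prefix_imp_sublist by metis
  next
    case False
    then have "is_overlap X W k"
      using k tk prefix_length_le[OF v] by (simp add: is_overlap_def)
    then have "k \<le> ov X W"
      by (rule ov_maximal)
    moreover have "ov X W \<le> ov X Y"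
      using W X_in by (auto simp: cand_iff intro: ov_le_ov_XY)
    ultimately show False
      using k(1) by simp
  qed
qed

lemma anchor_not_sublist_merge:
  assumes W: "W \<in> verts S" "W \<noteq> X" "W \<noteq> rc X" "W \<noteq> Y" "W \<noteq> rc Y"
    and v: "v \<in> V" "prefix v W"
  shows "\<not> sublist v (merge X Y)"
proof (rule prefix_not_sublist_merge[OF W(1-3) v(2)])
  show "\<not> sublist v X" "\<not> sublist v Y"
    using greedy_inv_not_sublist[OF inv W(1) _ _ _ v] X_in Y_in W by (metis rc_rc)+
qed

lemma anchor_merge_prefix:
  assumes v: "v \<in> V" "prefix v (merge X Y)"
  shows "prefix v X"
proof -
  obtain w where w: "w \<in> V" "prefix w X"
    using greedy_inv_anchor[OF inv X_in] by blast
  have "prefix v X \<or> prefix X v"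
    using prefix_merge v(2) prefix_same_cases by blast
  then show ?thesis
  proof
    assume "prefix X v"
    then have "w = v"
      using w substring_freeD[OF substring_free_V w(1) v(1)]
      by (metis prefix_imp_sublist prefix_order.trans)
    then show ?thesis
      using w by simp
  qed
qed

lemma merge_notin_verts: "merge X Y \<notin> verts S"
proof
  assume "merge X Y \<in> verts S"
  then have "X = merge X Y"
    using substring_freeD[OF substring_free_verts X_in] prefix_imp_sublist[OF prefix_merge] by blast
  then have "length X = length X + length Y - ov X Y"
    by (metis length_merge)
  then show False
    using ov_less_length2[OF Y_not_Nil, of X] by linarith
qed

text \<open>A self-overlap of \<open>merge X Y\<close> of length at least \<open>length Y\<close> would place \<open>Y\<close> inside
  \<open>merge X Y\<close> before its final position, hence inside \<open>X\<close> or overlapping \<open>X\<close> by more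
  than \<open>ov X Y\<close>.\<close>
lemma ov_merge_self_less_length2: "ov (merge X Y) (merge X Y) < length Y"
proof (rule ccontr)
  define m L d where "m = merge X Y" and "L = ov m m" and "d = ov X Y"
  assume "\<not> ov (merge X Y) (merge X Y) < length Y"
  then have LY: "length Y \<le> L"
    by (simp add: L_def m_def)
  then have p: "is_overlap m m L"
    using Y_not_Nil is_overlap_ov L_def by (cases Y) auto
  have oY: "d < length Y"
    using ov_less_length2[OF Y_not_Nil] d_def by simp
  have Lm: "L < length m"
    using p by (simp add: is_overlap_def)
  define q where "q = L - length Y"
  have "occurs_at Y m q"
    unfolding q_def using occurs_at_self_overlap[OF p _ LY] suffix_merge m_def by simp
  then have oc: "occurs_at Y (X @ drop d Y) q"
    by (simp add: m_def d_def merge_eq_append_drop)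
  have qlt: "q < length X - d"
    using Lm LY oY q_def by (simp add: m_def d_def length_merge)
  from oc show False
  proof (cases rule: occurs_at_append_cases)
    case 1
    then show False
      using substring_freeD[OF substring_free_verts Y_in X_in] X_neq_Y by simp
  next
    case 2
    then show False
      using qlt by simp
  next
    case 3
    show False
    proof (cases "q = 0")
      case True
      then have "prefix X Y"
        using 3 by (metis append_take_drop_id diff_zero drop_0 prefixI)
      then show False
        using substring_freeD[OF substring_free_verts X_in Y_in] X_neq_Y prefix_imp_sublist by blast
    next
      case False
      then have "is_overlap X Y (length X - q)"
        using 3 unfolding is_overlap_def by auto
      then have "length X - q \<le> d"
        using ov_maximal d_def by simp
      then show False
        using qlt by simp
    qed
  qed
qed

text \<open>A self-overlap of \<open>merge X Y\<close> at least as long as an anchor \<open>v\<close> of it would put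
  \<open>v\<close>, a prefix of \<open>X\<close>, inside \<open>Y\<close>: the self-overlap is shorter than both \<open>X\<close> and \<open>Y\<close>
  by the previous lemma and its reverse-complement version.\<close>
lemma ov_merge_self_less_anchor:
  assumes v: "v \<in> V" "prefix v (merge X Y)"
  shows "ov (merge X Y) (merge X Y) < length v"
proof (rule ccontr)
  define m L where "m = merge X Y" and "L = ov m m"
  assume "\<not> ov (merge X Y) (merge X Y) < length v"
  then have vL: "length v \<le> L"
    by (simp add: L_def m_def)
  have LY: "L < length Y"
    using ov_merge_self_less_length2 L_def m_def by simp
  have "L < length (rc X)"
    using greedy_join.ov_merge_self_less_length2[OF rc_join] L_def m_def
    by (simp add: rc_merge[symmetric] ov_rc)
  then have LX: "L < length X"
    by simp
  have pvX: "prefix v X"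
    using anchor_merge_prefix[OF v] .
  have "sublist v Y"
  proof (cases "L = 0")
    case False
    then have p: "is_overlap m m L"
      using is_overlap_ov L_def by blast
    obtain P where mP: "m = P @ Y"
      using suffix_merge[of Y X] m_def by (auto simp: suffix_def)
    have "take L X = take L m"
      using take_prefix_eq[OF prefix_merge] LX m_def by (metis less_imp_le_nat)
    also have "\<dots> = drop (length m - L) m"
      using p by (simp add: is_overlap_def)
    also have "\<dots> = drop (length Y - L) Y"
      using mP LY by simp
    finally have "prefix v (drop (length Y - L) Y)"
      using prefix_take_prefix[OF pvX vL] by simp
    then show ?thesis
      by (meson prefix_imp_sublist sublist_drop sublist_order.dual_order.trans)
  qed (use vL in simp)
  moreover have "\<not> sublist v Y"
    using greedy_inv_not_sublist[OF inv X_in Y_in _ _ v(1) pvX] X_neq_Y rc_X_neq_Y by metis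
  ultimately show False
    by simp
qed

lemma untouched_not_sublist_merge:
  assumes "a \<in> verts S" "a \<notin> {X, rc X, Y, rc Y}"
  shows "\<not> sublist a (merge X Y)"
  using prefix_not_sublist_merge[of a a] assms substring_freeD[OF substring_free_verts]
    X_in Y_in by blast

lemma merge_not_sublist_untouched:
  assumes "Z \<in> verts S" "Z \<notin> {X, rc X, Y, rc Y}"
  shows "\<not> sublist (merge X Y) Z"
proof
  assume "sublist (merge X Y) Z"
  then have "sublist X Z"
    using prefix_imp_sublist[OF prefix_merge] by (rule sublist_order.order_trans[rotated])
  then show False
    using assms substring_freeD[OF substring_free_verts X_in] by auto
qed

lemma merge_anchor_not_sublist_untouched:
  assumes "v \<in> V" "prefix v (merge X Y)" "Z \<in> verts S" "Z \<notin> {X, rc X, Y, rc Y}"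
  shows "\<not> sublist v Z"
  using assms greedy_inv_not_sublist[OF inv X_in] anchor_merge_prefix by blast

end

definition join_step :: "dna set \<Rightarrow> dna \<Rightarrow> dna \<Rightarrow> dna set" where
  "join_step S x y = (S - {x, rc x, y, rc y}) \<union> {merge x y}"

lemma verts_join_step:
  "verts (join_step S x y) = (verts S - {x, rc x, y, rc y}) \<union> {merge x y, rc (merge x y)}"
  unfolding join_step_def verts_def by (auto simp: image_iff)

context greedy_join
begin

lemma join_stepE:
  assumes "Z \<in> verts (join_step S X Y)"
  obtains "Z \<in> verts S" "Z \<notin> {X, rc X, Y, rc Y}"
    | "Z = merge X Y"
    | "Z = merge (rc Y) (rc X)"
  using assms unfolding verts_join_step rc_merge by blast

lemma rc_untouched_iff: "Z \<notin> {rc Y, rc (rc Y), rc X, rc (rc X)} \<longleftrightarrow> Z \<notin> {X, rc X, Y, rc Y}"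
  by auto

lemma substring_free_join_step: "substring_free (verts (join_step S X Y))"
  unfolding substring_free_def
proof (intro ballI impI notI)
  fix a b
  assume a: "a \<in> verts (join_step S X Y)" and b: "b \<in> verts (join_step S X Y)"
    and ab: "a \<noteq> b" "sublist a b"
  note rc = greedy_join.untouched_not_sublist_merge[OF rc_join]
    greedy_join.merge_not_sublist_untouched[OF rc_join]
  have merged: False
    if "a \<in> {merge X Y, merge (rc Y) (rc X)}" "b \<in> {merge X Y, merge (rc Y) (rc X)}"
    using that ab sublist_length_eq by (metis empty_iff insert_iff length_rc order_refl rc_merge)
  from a show False
  proof (cases rule: join_stepE)
    case 1
    from b show False
      by (cases rule: join_stepE)
        (use 1 ab substring_freeD[OF substring_free_verts] untouched_not_sublist_merge rc
          rc_untouched_iff in blast)+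
  next
    case 2
    from b show False
      by (cases rule: join_stepE) (use 2 ab merge_not_sublist_untouched merged in auto)
  next
    case 3
    from b show False
      by (cases rule: join_stepE) (use 3 ab rc rc_untouched_iff merged in auto)
  qed
qed

lemma join_step_anchor_not_sublist:
  assumes X0: "X0 \<in> verts (join_step S X Y)" and Z: "Z \<in> verts (join_step S X Y)"
    and ZX0: "Z \<noteq> X0" "Z \<noteq> rc X0" and v: "v \<in> V" "prefix v X0"
  shows "\<not> sublist v Z"
proof -
  note rc = greedy_join.anchor_not_sublist_merge[OF rc_join]
    greedy_join.merge_anchor_not_sublist_untouched[OF rc_join]
  from X0 show ?thesis
  proof (cases rule: join_stepE)
    case untouched: 1
    from Z show ?thesis
      by (cases rule: join_stepE)
        (use untouched ZX0 v greedy_inv_not_sublist[OF inv] anchor_not_sublist_merge rc in auto)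
  next
    case 2
    from Z show ?thesis
      by (cases rule: join_stepE) (use 2 ZX0 v merge_anchor_not_sublist_untouched rc_merge in auto)
  next
    case 3
    from Z show ?thesis
      by (cases rule: join_stepE) (use 3 ZX0 v rc rc_untouched_iff rc_merge in auto)
  qed
qed

lemma greedy_inv_join_step: "greedy_inv V (join_step S X Y)"
proof -
  note rc = greedy_join.X_in[OF rc_join] greedy_join.ov_merge_self_less_anchor[OF rc_join]
  have "\<exists>v\<in>V. prefix v X0" if "X0 \<in> verts (join_step S X Y)" for X0
    using that
  proof (cases rule: join_stepE)
    case 2
    then show ?thesis
      using greedy_inv_anchor[OF inv X_in] prefix_merge prefix_order.trans by blast
  next
    case 3
    then show ?thesis
      using greedy_inv_anchor[OF inv rc(1)] prefix_merge prefix_order.trans by blast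
  qed (use greedy_inv_anchor[OF inv] in blast)
  moreover have "ov X0 X0 < length v"
    if "X0 \<in> verts (join_step S X Y)" "X0 \<noteq> []" "v \<in> V" "prefix v X0" for X0 v
    using that(1)
    by (cases rule: join_stepE)
      (use that greedy_inv_ov_self[OF inv] ov_merge_self_less_anchor rc in auto)
  moreover have "finite (join_step S X Y)"
    using greedy_inv_finite[OF inv] by (simp add: join_step_def)
  ultimately show ?thesis
    unfolding greedy_inv_def using substring_free_join_step join_step_anchor_not_sublist by blast
qed

end

section \<open>Cycle covers\<close>

fun path_ov :: "dna list \<Rightarrow> nat" where
  "path_ov (x # y # r) = ov x y + path_ov (y # r)"
| "path_ov _ = 0"

lemma path_ov_eq_sum: "path_ov l = (\<Sum>i<length l - 1. ov (l ! i) (l ! Suc i))"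
proof (induction l rule: path_ov.induct)
  case (1 x y r)
  have "(\<Sum>i<length (x # y # r) - 1. ov ((x # y # r) ! i) ((x # y # r) ! Suc i))
      = ov x y + (\<Sum>i<length r. ov ((y # r) ! i) ((y # r) ! Suc i))"
    by (simp add: sum.lessThan_Suc_shift del: sum.lessThan_Suc)
  then show ?case
    using 1 by simp
qed auto

lemma path_ov_Cons: "l \<noteq> [] \<Longrightarrow> path_ov (x # l) = ov x (hd l) + path_ov l"
  by (cases l) auto

lemma path_ov_append:
  "l \<noteq> [] \<Longrightarrow> l' \<noteq> [] \<Longrightarrow> path_ov (l @ l') = path_ov l + ov (last l) (hd l') + path_ov l'"
proof (induction l)
  case (Cons x l)
  then show ?case
    by (cases "l = []") (simp_all add: path_ov_Cons)
qed simp

lemma path_ov_snoc: "l \<noteq> [] \<Longrightarrow> path_ov (l @ [x]) = path_ov l + ov (last l) x"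
  using path_ov_append[of l "[x]"] by simp

lemma path_ov_rc: "path_ov (map rc (rev l)) = path_ov l"
proof (induction l rule: path_ov.induct)
  case (1 x y r)
  have "map rc (rev (x # y # r)) = (map rc (rev r) @ [rc y]) @ [rc x]"
    by simp
  then have "path_ov (map rc (rev (x # y # r))) = path_ov (map rc (rev (y # r))) + ov (rc y) (rc x)"
    using path_ov_snoc[of "map rc (rev r) @ [rc y]" "rc x"] by simp
  then show ?case
    using 1 by (simp add: ov_rc)
qed auto

definition cycle_ov :: "dna list \<Rightarrow> nat" where
  "cycle_ov c = (case c of [] \<Rightarrow> 0 | x # r \<Rightarrow> path_ov (x # r @ [x]))"

lemma cycle_ov_Cons: "cycle_ov (x # r) = path_ov (x # r @ [x])"
  by (simp add: cycle_ov_def)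

lemma cycle_ov_single: "cycle_ov [x] = ov x x"
  by (simp add: cycle_ov_def)

lemma cycle_ov_eq_sum: "cycle_ov c = (\<Sum>i<length c. ov (c ! i) (c ! ((i + 1) mod length c)))"
proof (cases c)
  case (Cons x r)
  have "cycle_ov c = (\<Sum>i<length c. ov ((c @ [x]) ! i) ((c @ [x]) ! Suc i))"
    using Cons by (simp add: cycle_ov_def path_ov_eq_sum)
  also have "\<dots> = (\<Sum>i<length c. ov (c ! i) (c ! ((i + 1) mod length c)))"
  proof (rule sum.cong)
    fix i assume "i \<in> {..<length c}"
    then consider "Suc i < length c" | "Suc i = length c"
      by fastforce
    then show "ov ((c @ [x]) ! i) ((c @ [x]) ! Suc i) = ov (c ! i) (c ! ((i + 1) mod length c))"
    proof cases
      case 2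
      moreover have "c ! 0 = x"
        using Cons by simp
      ultimately show ?thesis
        by (simp add: nth_append)
    qed (simp add: nth_append)
  qed simp
  finally show ?thesis .
qed (simp add: cycle_ov_def)

lemma cycle_weight_add_cycle_ov: "cycle_weight c + cycle_ov c = sum_list (map length c)"
proof -
  have "cycle_weight c + cycle_ov c = (\<Sum>i<length c. length (c ! i))"
    unfolding cycle_weight_def cycle_ov_eq_sum by (simp add: sum.distrib[symmetric] dist_add_ov)
  also have "\<dots> = sum_list (map length c)"
    by (simp add: sum_list_sum_nth atLeast0LessThan)
  finally show ?thesis .
qed

lemma cycle_ov_rotate1: "cycle_ov (rotate1 c) = cycle_ov c"
proof (cases c)
  case (Cons x r)
  show ?thesis
  proof (cases r)
    case (Cons y r')
    have "cycle_ov (rotate1 c) = path_ov (y # r' @ [x]) + ov x y"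
      using \<open>c = x # r\<close> Cons path_ov_snoc[of "y # r' @ [x]" y] by (simp add: cycle_ov_def)
    also have "\<dots> = cycle_ov c"
      using \<open>c = x # r\<close> Cons by (simp add: cycle_ov_def)
    finally show ?thesis .
  qed (use Cons in simp)
qed simp

lemma cycle_ov_rotate: "cycle_ov (rotate n c) = cycle_ov c"
  by (induction n) (simp_all add: rotate_def cycle_ov_rotate1)

lemma cycle_ov_append_commute: "cycle_ov (a @ b) = cycle_ov (b @ a)"
  by (metis cycle_ov_rotate rotate_append)

lemma cycle_ov_rc: "cycle_ov (map rc (rev c)) = cycle_ov c"
proof (cases c)
  case (Cons x r)
  have "cycle_ov (map rc (rev c)) = cycle_ov (map rc (rev r) @ [rc x])"
    using Cons by simp
  also have "\<dots> = cycle_ov (rc x # map rc (rev r))"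
    using cycle_ov_append_commute[of _ "[rc x]"] by simp
  also have "\<dots> = path_ov (map rc (rev (x # r @ [x])))"
    by (simp add: cycle_ov_Cons)
  finally show ?thesis
    using Cons by (simp only: path_ov_rc cycle_ov_Cons)
qed simp

lemma cycle_ov_Cons_path_ov: "l \<noteq> [] \<Longrightarrow> cycle_ov (x # l) = ov x (hd l) + path_ov l + ov (last l) x"
  by (simp add: cycle_ov_Cons path_ov_Cons path_ov_snoc)

lemma cycle_ov_eq_path_ov: "l \<noteq> [] \<Longrightarrow> cycle_ov l = path_ov l + ov (last l) (hd l)"
  by (cases l) (simp_all add: cycle_ov_Cons path_ov_snoc[of "_ # _", simplified])

lemma cycle_weight_eqI:
  "cycle_ov c' = cycle_ov c \<Longrightarrow> sum_list (map length c') = sum_list (map length c) \<Longrightarrow>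
    cycle_weight c' = cycle_weight c"
  using cycle_weight_add_cycle_ov[of c] cycle_weight_add_cycle_ov[of c'] by simp

lemma cycle_weight_rc: "cycle_weight (map rc (rev c)) = cycle_weight c"
proof (rule cycle_weight_eqI)
  show "cycle_ov (map rc (rev c)) = cycle_ov c"
    by (rule cycle_ov_rc)
  show "sum_list (map length (map rc (rev c))) = sum_list (map length c)"
    by (simp add: comp_def rev_map[symmetric])
qed

definition rc_transversal :: "dna set \<Rightarrow> dna set \<Rightarrow> bool" where
  "rc_transversal S U \<longleftrightarrow> U \<subseteq> verts S \<and> (\<forall>s\<in>S. s \<in> U \<or> rc s \<in> U) \<and> (\<forall>x\<in>U. rc x \<in> U \<longrightarrow> rc x = x)"

lemma rc_transversal_iff:
  assumes "U \<subseteq> verts S"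
  shows "rc_transversal S U \<longleftrightarrow>
    (\<forall>s\<in>S. (s \<in> U \<or> rc s \<in> U) \<and> (s \<noteq> rc s \<longrightarrow> \<not> (s \<in> U \<and> rc s \<in> U)))"
proof
  assume "rc_transversal S U"
  then show "\<forall>s\<in>S. (s \<in> U \<or> rc s \<in> U) \<and> (s \<noteq> rc s \<longrightarrow> \<not> (s \<in> U \<and> rc s \<in> U))"
    unfolding rc_transversal_def by metis
next
  assume a: "\<forall>s\<in>S. (s \<in> U \<or> rc s \<in> U) \<and> (s \<noteq> rc s \<longrightarrow> \<not> (s \<in> U \<and> rc s \<in> U))"
  have "rc x = x" if x: "x \<in> U" "rc x \<in> U" for x
  proof -
    consider "x \<in> S" | s where "s \<in> S" "x = rc s"
      using x assms by (auto simp: verts_def)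
    then show ?thesis
      by cases (use a x in auto)
  qed
  then show "rc_transversal S U"
    using a assms by (auto simp: rc_transversal_def)
qed

lemma is_cycle_cover_iff:
  "is_cycle_cover S C \<longleftrightarrow>
    (\<forall>c\<in>set C. c \<noteq> []) \<and> distinct (concat C) \<and> rc_transversal S (set (concat C))"
proof (cases "set (concat C) \<subseteq> verts S")
  case True
  then show ?thesis
    unfolding is_cycle_cover_def rc_transversal_iff[OF True] by blast
qed (auto simp: is_cycle_cover_def rc_transversal_def)

lemma rc_transversal_cases: "rc_transversal S U \<Longrightarrow> x \<in> verts S \<Longrightarrow> x \<in> U \<or> rc x \<in> U"
  by (auto simp: rc_transversal_def verts_def)

lemma rc_transversal_cand: "rc_transversal S U \<Longrightarrow> x \<in> U \<Longrightarrow> y \<in> U \<Longrightarrow> (x, y) \<in> cand S"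
  unfolding rc_transversal_def cand_iff by auto

lemma rc_transversal_rc_image:
  assumes U: "rc_transversal S U" and Q: "Q \<subseteq> U"
  shows "rc_transversal S ((U - Q) \<union> rc ` Q)"
  unfolding rc_transversal_def
proof (intro conjI ballI impI)
  show "U - Q \<union> rc ` Q \<subseteq> verts S"
    using U Q rc_in_verts by (auto simp: rc_transversal_def)
next
  fix s assume "s \<in> S"
  then have "s \<in> U \<or> rc s \<in> U"
    using U by (simp add: rc_transversal_def)
  then show "s \<in> U - Q \<union> rc ` Q \<or> rc s \<in> U - Q \<union> rc ` Q"
    by (metis DiffI UnI1 UnI2 image_eqI rc_rc)
next
  have fix_rc: "rc y = y" if "y \<in> U" "rc y \<in> U" for y
    using U that by (simp add: rc_transversal_def)
  fix x assume x: "x \<in> U - Q \<union> rc ` Q" and rx: "rc x \<in> U - Q \<union> rc ` Q"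
  have "x \<in> U \<or> rc x \<in> Q" and "rc x \<in> U \<or> x \<in> Q"
    using x rx by (auto simp: image_iff)
  then show "rc x = x"
    using fix_rc Q x rx by (metis DiffE UnE imageE rc_rc subsetD)
qed

lemma cycle_cover_nonempty: "is_cycle_cover S C \<Longrightarrow> c \<in> set C \<Longrightarrow> c \<noteq> []"
  by (simp add: is_cycle_cover_iff)

lemma cycle_cover_rc_transversal: "is_cycle_cover S C \<Longrightarrow> rc_transversal S (set (concat C))"
  by (simp add: is_cycle_cover_iff)

lemma cycle_cover_perm:
  assumes "is_cycle_cover S C" "mset (concat C') = mset (concat C)" "\<forall>c\<in>set C'. c \<noteq> []"
  shows "is_cycle_cover S C'"
  using assms mset_eq_setD mset_eq_imp_distinct_iff unfolding is_cycle_cover_iff by metis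

lemma distinct_rc_segment:
  assumes d: "distinct (P @ c @ R)" and fix_rc: "\<forall>s\<in>set c. rc s \<in> set (P @ c @ R) \<longrightarrow> rc s = s"
  shows "distinct (P @ map rc (rev c) @ R)"
proof -
  have "distinct (map rc (rev c))"
    using d by (simp add: distinct_map inj_on_def)
  moreover have "rc s \<notin> set P \<and> rc s \<notin> set R" if s: "s \<in> set c" for s
  proof (rule ccontr)
    assume r: "\<not> (rc s \<notin> set P \<and> rc s \<notin> set R)"
    then have "rc s = s"
      using fix_rc s by auto
    then show False
      using d s r by auto
  qed
  ultimately show ?thesis
    using d by auto
qed

lemma cycle_cover_rc_segment:
  assumes cv: "is_cycle_cover S ((P @ c @ Q) # Cs)" and ne: "P @ map rc (rev c) @ Q \<noteq> []"
  shows "is_cycle_cover S ((P @ map rc (rev c) @ Q) # Cs)"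
proof -
  define U where "U = set (concat ((P @ c @ Q) # Cs))"
  have d: "distinct (P @ c @ (Q @ concat Cs))"
    using cv by (simp add: is_cycle_cover_iff)
  have U: "rc_transversal S U"
    using cv by (simp add: is_cycle_cover_iff U_def)
  then have "\<forall>s\<in>set c. rc s \<in> set (P @ c @ (Q @ concat Cs)) \<longrightarrow> rc s = s"
    by (auto simp: rc_transversal_def U_def)
  then have "distinct (P @ map rc (rev c) @ (Q @ concat Cs))"
    by (rule distinct_rc_segment[OF d])
  moreover have "set (P @ Q @ concat Cs) = U - set c"
    using d by (auto simp: U_def)
  then have "set (concat ((P @ map rc (rev c) @ Q) # Cs)) = (U - set c) \<union> rc ` set c"
    by auto
  moreover have "rc_transversal S ((U - set c) \<union> rc ` set c)"
    using rc_transversal_rc_image[OF U] by (auto simp: U_def)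
  ultimately show ?thesis
    using cv ne by (simp add: is_cycle_cover_iff)
qed

lemma cycle_cover_exists: "finite S \<Longrightarrow> \<exists>C. is_cycle_cover S C"
proof (induction S rule: finite_induct)
  case empty
  have "is_cycle_cover {} []"
    by (simp add: is_cycle_cover_iff rc_transversal_def)
  then show ?case ..
next
  case (insert s S)
  then obtain C where C: "is_cycle_cover S C"
    by blast
  have vsub: "verts S \<subseteq> verts (insert s S)"
    by (auto simp: verts_def)
  show ?case
  proof (cases "s \<in> set (concat C) \<or> rc s \<in> set (concat C)")
    case True
    then have "is_cycle_cover (insert s S) C"
      using C vsub by (auto simp: is_cycle_cover_iff rc_transversal_def)
    then show ?thesis ..
  next
    case False
    then have "is_cycle_cover (insert s S) ([s] # C)"
      using C vsub by (auto simp: is_cycle_cover_iff rc_transversal_def verts_def)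
    then show ?thesis ..
  qed
qed

definition cover_length :: "dna list list \<Rightarrow> nat" where
  "cover_length C = sum_list (map length (concat C))"

definition cover_ov :: "dna list list \<Rightarrow> nat" where
  "cover_ov C = sum_list (map cycle_ov C)"

lemma cover_weight_Nil [simp]: "cover_weight [] = 0"
  and cover_weight_Cons [simp]: "cover_weight (c # C) = cycle_weight c + cover_weight C"
  by (simp_all add: cover_weight_def)

lemma cover_ov_Nil [simp]: "cover_ov [] = 0"
  and cover_ov_Cons [simp]: "cover_ov (c # C) = cycle_ov c + cover_ov C"
  and cover_ov_append [simp]: "cover_ov (C @ D) = cover_ov C + cover_ov D"
  by (simp_all add: cover_ov_def)

lemma cover_length_Nil [simp]: "cover_length [] = 0"
  and cover_length_Cons [simp]: "cover_length (c # C) = sum_list (map length c) + cover_length C"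
  by (simp_all add: cover_length_def)

lemma cover_weight_add_cover_ov: "cover_weight C + cover_ov C = cover_length C"
  by (induction C) (simp_all add: cycle_weight_add_cycle_ov[symmetric])

lemma cover_length_perm: "mset (concat C') = mset (concat C) \<Longrightarrow> cover_length C' = cover_length C"
  unfolding cover_length_def by (metis mset_map sum_mset_sum_list)

definition optimal_cover :: "dna set \<Rightarrow> dna list list \<Rightarrow> bool" where
  "optimal_cover S C \<longleftrightarrow> is_cycle_cover S C \<and> cover_weight C = wCYC S"

lemma wCYC_le: "is_cycle_cover S C \<Longrightarrow> wCYC S \<le> cover_weight C"
  unfolding wCYC_def by (rule Least_le) blast

lemma optimal_cover_exists: "finite S \<Longrightarrow> \<exists>C. optimal_cover S C"
proof -
  assume "finite S"
  then have "\<exists>w C. is_cycle_cover S C \<and> cover_weight C = w"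
    using cycle_cover_exists by blast
  then show ?thesis
    unfolding optimal_cover_def wCYC_def by (rule LeastI_ex)
qed

lemma optimal_coverI:
  "optimal_cover S C \<Longrightarrow> is_cycle_cover S C' \<Longrightarrow> cover_weight C' \<le> cover_weight C \<Longrightarrow> optimal_cover S C'"
  unfolding optimal_cover_def using wCYC_le[of S C'] by simp

lemma optimal_cover_cycle_cover: "optimal_cover S C \<Longrightarrow> is_cycle_cover S C"
  by (simp add: optimal_cover_def)

lemma optimal_cover_exchange:
  assumes "optimal_cover S C" "is_cycle_cover S C'" "cover_length C' = cover_length C"
    and "cover_ov C \<le> cover_ov C'"
  shows "optimal_cover S C'"
  using assms cover_weight_add_cover_ov[of C] cover_weight_add_cover_ov[of C']
  by (intro optimal_coverI[OF assms(1,2)]) linarith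

lemma optimal_cover_perm:
  assumes "optimal_cover S C" "mset (concat C') = mset (concat C)" "\<forall>c\<in>set C'. c \<noteq> []"
    and "cover_ov C \<le> cover_ov C'"
  shows "optimal_cover S C'"
  using assms cycle_cover_perm[OF optimal_cover_cycle_cover[OF assms(1)] assms(2,3)]
    cover_length_perm[OF assms(2)] optimal_cover_exchange by blast

lemma optimal_cover_rc_cycle:
  assumes "optimal_cover S (c # Cs)"
  shows "optimal_cover S (map rc (rev c) # Cs)"
proof -
  have cv: "is_cycle_cover S (([] @ c @ []) # Cs)"
    using assms by (simp add: optimal_cover_def)
  then have "c \<noteq> []"
    using cycle_cover_nonempty by fastforce
  then have "is_cycle_cover S (([] @ map rc (rev c) @ []) # Cs)"
    using cycle_cover_rc_segment[OF cv] by simp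
  then show ?thesis
    using assms by (simp add: optimal_cover_def cycle_weight_rc)
qed

lemma optimal_cover_rc_other_cycle:
  assumes C: "optimal_cover S (c0 # Cs)" and x: "x \<in> set (concat Cs)"
  shows "\<exists>Cs'. optimal_cover S (c0 # Cs') \<and> rc x \<in> set (concat Cs')"
proof -
  obtain c where "c \<in> set Cs" and xc: "x \<in> set c"
    using x by auto
  obtain C1 C2 where Cs: "Cs = C1 @ c # C2"
    using split_list[OF \<open>c \<in> set Cs\<close>] by blast
  have "optimal_cover S (c # c0 # C1 @ C2)"
    using Cs cycle_cover_nonempty[OF optimal_cover_cycle_cover[OF C]]
    by (intro optimal_cover_perm[OF C]) (auto simp: ac_simps)
  then have rc_c: "optimal_cover S (map rc (rev c) # c0 # C1 @ C2)"
    by (rule optimal_cover_rc_cycle)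
  have "optimal_cover S (c0 # map rc (rev c) # C1 @ C2)"
    by (rule optimal_cover_perm[OF rc_c])
      (use cycle_cover_nonempty[OF optimal_cover_cycle_cover[OF rc_c]] in \<open>auto simp: ac_simps\<close>)
  moreover have "rc x \<in> set (concat (map rc (rev c) # C1 @ C2))"
    using xc by simp
  ultimately show ?thesis
    by blast
qed

lemma optimal_cover_starting_at:
  assumes C: "optimal_cover S C" and x: "x \<in> verts S"
  shows "\<exists>A Cs. optimal_cover S ((x # A) # Cs)"
proof -
  have front: "\<exists>A Cs. optimal_cover S ((z # A) # Cs)"
    if opt: "optimal_cover S C'" and z: "z \<in> set (concat C')" for C' z
  proof -
    obtain c where "c \<in> set C'" and "z \<in> set c"
      using z by auto
    obtain C1 C2 where C': "C' = C1 @ c # C2"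
      using split_list[OF \<open>c \<in> set C'\<close>] by blast
    obtain c1 c2 where c: "c = c1 @ z # c2"
      using split_list[OF \<open>z \<in> set c\<close>] by blast
    have "optimal_cover S ((z # c2 @ c1) # C1 @ C2)"
    proof (rule optimal_cover_perm[OF opt])
      show "cover_ov C' \<le> cover_ov ((z # c2 @ c1) # C1 @ C2)"
        using cycle_ov_append_commute[of c1 "z # c2"] C' c by simp
      show "mset (concat ((z # c2 @ c1) # C1 @ C2)) = mset (concat C')"
        using C' c by simp
      show "\<forall>c\<in>set ((z # c2 @ c1) # C1 @ C2). c \<noteq> []"
        using C' cycle_cover_nonempty[OF optimal_cover_cycle_cover[OF opt]] by auto
    qed
    then show ?thesis
      by blast
  qed
  consider "x \<in> set (concat C)" | "rc x \<in> set (concat C)"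
    using rc_transversal_cases[OF cycle_cover_rc_transversal[OF optimal_cover_cycle_cover[OF C]] x]
    by blast
  then show ?thesis
  proof cases
    case 2
    then obtain A Cs where "optimal_cover S ((rc x # A) # Cs)"
      using front[OF C] by blast
    then have "optimal_cover S (map rc (rev (rc x # A)) # Cs)"
      by (rule optimal_cover_rc_cycle)
    moreover have "x \<in> set (concat (map rc (rev (rc x # A)) # Cs))"
      by simp
    ultimately show ?thesis
      by (rule front)
  qed (rule front[OF C])
qed

section \<open>Greedy steps and optimal cycle covers\<close>

lemma max_pair_monge:
  assumes "max_pair S x y" "(x, b) \<in> cand S" "(a, y) \<in> cand S"
  shows "ov x b + ov a y \<le> ov x y + ov a b"
  using assms by (intro ov_monge) (auto dest: max_pairD)

text \<open>If \<open>(X, X)\<close> is a maximal pair, some optimal cover contains the loop at \<open>X\<close>: cutting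
  \<open>X\<close> out of its cycle loses \<open>ov X (hd A) + ov (last A) X\<close> and gains
  \<open>ov X X + ov (last A) (hd A)\<close>.\<close>
lemma optimal_cover_self_loop:
  assumes C: "optimal_cover S C" and mp: "max_pair S X X"
  shows "\<exists>Cs. optimal_cover S ([X] # Cs)"
proof -
  have "X \<in> verts S"
    using mp by (simp add: max_pair_def cand_iff)
  then obtain A Cs where AC: "optimal_cover S ((X # A) # Cs)"
    using optimal_cover_starting_at[OF C] by blast
  show ?thesis
  proof (cases "A = []")
    case False
    have U: "rc_transversal S (set (concat ((X # A) # Cs)))"
      using AC by (simp add: optimal_cover_def is_cycle_cover_iff)
    have "ov X (hd A) + ov (last A) X \<le> ov X X + ov (last A) (hd A)"
      using False by (intro max_pair_monge[OF mp] rc_transversal_cand[OF U]) auto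
    then have "cover_ov ((X # A) # Cs) \<le> cover_ov ([X] # A # Cs)"
      using cycle_ov_Cons_path_ov[OF False, of X] cycle_ov_eq_path_ov[OF False] by (simp add: cycle_ov_single)
    then have "optimal_cover S ([X] # A # Cs)"
      using False AC cycle_cover_nonempty[OF optimal_cover_cycle_cover[OF AC]]
      by (intro optimal_cover_perm[OF AC]) auto
    then show ?thesis ..
  qed (use AC in auto)
qed

lemma cycle_cover_remove_self_loop:
  assumes "is_cycle_cover S ([X] # Cs)"
  shows "is_cycle_cover (S - {X, rc X}) Cs"
proof -
  define U where "U = set (concat Cs)"
  have U: "rc_transversal S (insert X U)" and d: "distinct (X # concat Cs)"
    and ne: "\<forall>c\<in>set Cs. c \<noteq> []"
    using assms by (simp_all add: is_cycle_cover_iff U_def)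
  have XU: "X \<notin> U" and rc_XU: "rc X \<notin> U"
    using d U by (auto simp: U_def rc_transversal_def)
  have "U \<subseteq> verts (S - {X, rc X})"
  proof
    fix x assume "x \<in> U"
    then have "x \<in> verts S" "x \<noteq> X" "x \<noteq> rc X"
      using U XU rc_XU by (auto simp: rc_transversal_def)
    then show "x \<in> verts (S - {X, rc X})"
      by (auto simp: verts_def)
  qed
  then have "rc_transversal (S - {X, rc X}) U"
    using U by (auto simp: rc_transversal_def)
  then show ?thesis
    using d ne by (simp add: is_cycle_cover_iff U_def)
qed

lemma wCYC_remove_self_loop:
  assumes "finite S" "max_pair S X X"
  shows "wCYC (S - {X, rc X}) + dist X X \<le> wCYC S"
proof -
  obtain C where "optimal_cover S C"
    using optimal_cover_exists[OF assms(1)] by blast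
  then obtain Cs where Cs: "optimal_cover S ([X] # Cs)"
    using optimal_cover_self_loop[OF _ assms(2)] by blast
  then have "wCYC (S - {X, rc X}) \<le> cover_weight Cs"
    by (intro wCYC_le cycle_cover_remove_self_loop) (simp add: optimal_cover_def)
  then show ?thesis
    using Cs by (simp add: optimal_cover_def cycle_weight_def)
qed

context greedy_join
begin

lemma monge_XY: "(X, b) \<in> cand S \<Longrightarrow> (a, Y) \<in> cand S \<Longrightarrow> ov X b + ov a Y \<le> ov X Y + ov a b"
  using max_pair by (rule max_pair_monge)

text \<open>Wherever \<open>Y\<close> or \<open>rc Y\<close> lies in an optimal cover, the edge \<open>(X, Y)\<close> can be created by
  rerouting; the Monge inequality shows that the total overlap does not drop.\<close>

lemma optimal_cover_edge_same_cycle: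
  assumes AC: "optimal_cover S ((X # A @ Y # B) # Cs)"
  shows "\<exists>B Cs. optimal_cover S ((X # Y # B) # Cs)"
proof (cases "A = []")
  case False
  have U: "rc_transversal S (set (concat ((X # A @ Y # B) # Cs)))"
    using AC by (simp add: optimal_cover_def is_cycle_cover_iff)
  have "ov X (hd A) + ov (last A) Y \<le> ov X Y + ov (last A) (hd A)"
    using False by (intro monge_XY rc_transversal_cand[OF U]) auto
  then have "cover_ov ((X # A @ Y # B) # Cs) \<le> cover_ov ((X # Y # B) # A # Cs)"
    using False cycle_ov_Cons_path_ov[of "A @ Y # B" X] cycle_ov_Cons_path_ov[of "Y # B" X]
      path_ov_append[OF False, of "Y # B"] cycle_ov_eq_path_ov[OF False] by simp
  then have "optimal_cover S ((X # Y # B) # A # Cs)"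
    using False cycle_cover_nonempty[OF optimal_cover_cycle_cover[OF AC]]
    by (intro optimal_cover_perm[OF AC]) auto
  then show ?thesis
    by blast
qed (use AC in auto)

lemma optimal_cover_edge_other_cycle:
  assumes AC: "optimal_cover S ((X # A) # Cs)" and Y: "Y \<in> set (concat Cs)"
  shows "\<exists>B Cs. optimal_cover S ((X # Y # B) # Cs)"
proof -
  obtain c where "c \<in> set Cs" and "Y \<in> set c"
    using Y by auto
  obtain C1 C2 where Cs: "Cs = C1 @ c # C2"
    using split_list[OF \<open>c \<in> set Cs\<close>] by blast
  obtain c1 c2 where c: "c = c1 @ Y # c2"
    using split_list[OF \<open>Y \<in> set c\<close>] by blast
  define B where "B = c2 @ c1"
  define h where "h = hd (A @ [X])"
  define y' where "y' = last (Y # B)"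
  have U: "rc_transversal S (set (concat ((X # A) # Cs)))"
    using AC by (simp add: optimal_cover_def is_cycle_cover_iff)
  have h: "h \<in> set (X # A)"
    unfolding h_def by (cases A) auto
  have "y' \<in> set (Y # B)"
    unfolding y'_def by (rule last_in_set) simp
  then have "y' \<in> set c"
    using c B_def by auto
  then have "ov X h + ov y' Y \<le> ov X Y + ov y' h"
    using h Cs c \<open>c \<in> set Cs\<close> by (intro monge_XY rc_transversal_cand[OF U]) auto
  moreover have "cycle_ov (X # A) = ov X h + path_ov (A @ [X])"
    using cycle_ov_Cons[of X A] path_ov_Cons[of "A @ [X]" X] h_def by simp
  moreover have "cycle_ov c = path_ov (Y # B) + ov y' Y"
    using cycle_ov_append_commute[of c1 "Y # c2"] cycle_ov_Cons[of Y B]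
      path_ov_snoc[of "Y # B" Y] c B_def y'_def by simp
  moreover have "cycle_ov (X # Y # B @ A) = ov X Y + path_ov (Y # B) + ov y' h + path_ov (A @ [X])"
    using cycle_ov_Cons[of X "Y # B @ A"] path_ov_append[of "Y # B" "A @ [X]"] h_def y'_def
    by simp
  ultimately have "cover_ov ((X # A) # Cs) \<le> cover_ov ((X # Y # B @ A) # C1 @ C2)"
    using Cs by simp
  then have "optimal_cover S ((X # Y # B @ A) # C1 @ C2)"
    using Cs c B_def cycle_cover_nonempty[OF optimal_cover_cycle_cover[OF AC]]
    by (intro optimal_cover_perm[OF AC]) (auto simp: ac_simps)
  then show ?thesis
    by blast
qed

lemma optimal_cover_edge_rc_same_cycle:
  assumes AC: "optimal_cover S ((X # A @ rc Y # B) # Cs)"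
    and Y: "Y \<notin> set (concat ((X # A @ rc Y # B) # Cs))"
  shows "\<exists>B Cs. optimal_cover S ((X # Y # B) # Cs)"
proof -
  define B' where "B' = map rc (rev A) @ B"
  define h1 h2 where "h1 = hd (A @ [rc Y])" and "h2 = hd (B @ [X])"
  have U: "rc_transversal S (set (concat ((X # A @ rc Y # B) # Cs)))"
    using AC by (simp add: optimal_cover_def is_cycle_cover_iff)
  have "is_cycle_cover S (([X] @ (A @ [rc Y]) @ B) # Cs)"
    using AC by (simp add: optimal_cover_def)
  then have cv: "is_cycle_cover S ((X # Y # B') # Cs)"
    using cycle_cover_rc_segment[of S "[X]" "A @ [rc Y]" B Cs] by (simp add: B'_def)
  have h1: "h1 \<in> set (A @ [rc Y])"
    unfolding h1_def by (cases A) auto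
  have h2: "h2 \<in> set (B @ [X])"
    unfolding h2_def by (cases B) auto
  have "(X, h1) \<in> cand S"
    using h1 by (intro rc_transversal_cand[OF U]) auto
  moreover have "(rc h2, Y) \<in> cand S"
    using h2 U Y Y_in by (auto simp: rc_transversal_def cand_iff rc_in_verts)
  ultimately have "ov X h1 + ov (rc h2) Y \<le> ov X Y + ov (rc h2) h1"
    by (rule monge_XY)
  moreover have "cycle_ov (X # A @ rc Y # B)
      = ov X h1 + path_ov (A @ [rc Y]) + ov (rc Y) h2 + path_ov (B @ [X])"
    using cycle_ov_Cons[of X "A @ rc Y # B"] path_ov_append[of "X # A @ [rc Y]" "B @ [X]"]
      path_ov_Cons[of "A @ [rc Y]" X] h1_def h2_def by simp
  moreover have "last (Y # map rc (rev A)) = rc h1"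
    unfolding h1_def by (cases A) (auto simp: last_map)
  then have "cycle_ov (X # Y # B')
      = ov X Y + path_ov (A @ [rc Y]) + ov (rc h1) h2 + path_ov (B @ [X])"
    using cycle_ov_Cons[of X "Y # B'"] path_ov_append[of "Y # map rc (rev A)" "B @ [X]"]
      path_ov_rc[of "A @ [rc Y]"] h2_def by (simp add: B'_def)
  ultimately have "cover_ov ((X # A @ rc Y # B) # Cs) \<le> cover_ov ((X # Y # B') # Cs)"
    using ov_rc[of Y "rc h2"] ov_rc[of h1 "rc h2"] by simp
  moreover have "cover_length ((X # Y # B') # Cs) = cover_length ((X # A @ rc Y # B) # Cs)"
    by (simp add: B'_def comp_def rev_map[symmetric])
  ultimately have "optimal_cover S ((X # Y # B') # Cs)"
    using optimal_cover_exchange[OF AC cv] by simp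
  then show ?thesis
    by blast
qed

lemma optimal_cover_edge: "\<exists>B Cs. optimal_cover S ((X # Y # B) # Cs)"
proof -
  obtain C where "optimal_cover S C"
    using optimal_cover_exists greedy_inv_finite[OF inv] by blast
  then obtain A Cs where AC: "optimal_cover S ((X # A) # Cs)"
    using optimal_cover_starting_at X_in by blast
  have U: "rc_transversal S (set (concat ((X # A) # Cs)))"
    using AC by (simp add: optimal_cover_def is_cycle_cover_iff)
  consider "Y \<in> set A" | "Y \<in> set (concat Cs)" | "Y \<notin> set (concat ((X # A) # Cs))" "rc Y \<in> set A"
    | "rc Y \<in> set (concat Cs)"
    using rc_transversal_cases[OF U Y_in] X_neq_Y rc_X_neq_Y by auto
  then show ?thesis
  proof cases
    case 1
    then obtain A1 B where "A = A1 @ Y # B"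
      by (meson split_list)
    then show ?thesis
      using optimal_cover_edge_same_cycle AC by blast
  next
    case 2
    then show ?thesis
      using optimal_cover_edge_other_cycle[OF AC] by blast
  next
    case 3
    then obtain A1 B where "A = A1 @ rc Y # B"
      by (meson split_list)
    then show ?thesis
      using optimal_cover_edge_rc_same_cycle AC 3(1) by blast
  next
    case 4
    then obtain Cs' where "optimal_cover S ((X # A) # Cs')" "rc (rc Y) \<in> set (concat Cs')"
      using optimal_cover_rc_other_cycle[OF AC] by blast
    then show ?thesis
      using optimal_cover_edge_other_cycle by simp
  qed
qed

end

text \<open>As \<open>merge x y\<close> starts with \<open>x\<close> and ends with \<open>y\<close>, its overlaps with the neighbours of the
  edge \<open>(x, y)\<close> are at least those of \<open>x\<close> and \<open>y\<close>.\<close>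
lemma cycle_ov_contract: "cycle_ov (x # y # B) \<le> cycle_ov (merge x y # B) + ov x y"
proof (cases "B = []")
  case True
  then show ?thesis
    using ov_le_ov_merge_self[of y x] by (simp add: cycle_ov_def)
next
  case False
  have "ov y (hd B) \<le> ov (merge x y) (hd B)"
    by (rule ov_mono_suffix[OF suffix_merge])
  moreover have "ov (last B) x \<le> ov (last B) (merge x y)"
    by (rule ov_mono_prefix[OF prefix_merge])
  ultimately show ?thesis
    using cycle_ov_Cons_path_ov[of "y # B" x] cycle_ov_Cons_path_ov[OF False, of "merge x y"]
      path_ov_Cons[OF False, of y] False by simp
qed

lemma cycle_weight_contract: "cycle_weight (merge x y # B) \<le> cycle_weight (x # y # B)"
  using cycle_weight_add_cycle_ov[of "x # y # B"] cycle_weight_add_cycle_ov[of "merge x y # B"]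
    cycle_ov_contract[of x y B] length_merge[of x y] ov_le_length2[of x y] by simp

context greedy_join
begin

lemma cycle_cover_join_step:
  assumes "is_cycle_cover S ((X # Y # B) # Cs)"
  shows "is_cycle_cover (join_step S X Y) ((merge X Y # B) # Cs)"
proof -
  define R where "R = set B \<union> set (concat Cs)"
  have d: "distinct (X # Y # B @ concat Cs)" and ne: "\<forall>c\<in>set Cs. c \<noteq> []"
    and U: "rc_transversal S (insert X (insert Y R))"
    using assms by (simp_all add: is_cycle_cover_iff R_def)
  have fix_rc: "rc x = x" if "x \<in> insert X (insert Y R)" "rc x \<in> insert X (insert Y R)" for x
    using U that unfolding rc_transversal_def by blast
  have R: "R \<subseteq> verts S"
    using U by (simp add: rc_transversal_def)
  have XYR: "X \<notin> R" "Y \<notin> R"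
    using d by (auto simp: R_def)
  then have rc_XYR: "rc X \<notin> R" "rc Y \<notin> R"
    using fix_rc[of X] fix_rc[of Y] by auto
  have mR: "merge X Y \<notin> R" "rc (merge X Y) \<notin> R"
    using merge_notin_verts rc_in_verts R by (metis rc_rc subsetD)+
  have "rc_transversal (join_step S X Y) (insert (merge X Y) R)"
    unfolding rc_transversal_def
  proof (intro conjI ballI impI)
    show "insert (merge X Y) R \<subseteq> verts (join_step S X Y)"
      using R XYR rc_XYR by (auto simp: verts_join_step)
  next
    fix s assume s: "s \<in> join_step S X Y"
    show "s \<in> insert (merge X Y) R \<or> rc s \<in> insert (merge X Y) R"
    proof (cases "s = merge X Y")
      case False
      then have "s \<in> S" "s \<notin> {X, rc X, Y, rc Y}"
        using s by (auto simp: join_step_def)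
      moreover from this(1) have "s \<in> insert X (insert Y R) \<or> rc s \<in> insert X (insert Y R)"
        using U by (simp add: rc_transversal_def)
      ultimately show ?thesis
        by auto
    qed simp
  next
    fix x assume "x \<in> insert (merge X Y) R" "rc x \<in> insert (merge X Y) R"
    then show "rc x = x"
      using mR fix_rc by (metis insertCI insertE rc_rc)
  qed
  moreover have "distinct (merge X Y # B @ concat Cs)"
    using d mR by (simp add: R_def)
  ultimately show ?thesis
    using ne by (simp add: is_cycle_cover_iff R_def)
qed

lemma wCYC_join_step: "wCYC (join_step S X Y) \<le> wCYC S"
proof -
  obtain B Cs where opt: "optimal_cover S ((X # Y # B) # Cs)"
    using optimal_cover_edge by blast
  then have "wCYC (join_step S X Y) \<le> cover_weight ((merge X Y # B) # Cs)"
    by (intro wCYC_le cycle_cover_join_step) (simp add: optimal_cover_def)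
  also have "\<dots> \<le> cover_weight ((X # Y # B) # Cs)"
    using cycle_weight_contract by simp
  finally show ?thesis
    using opt by (simp add: optimal_cover_def)
qed

end

text \<open>An output \<open>x\<close> is a loop of some optimal cover, which loses weight \<open>dist x x\<close> when the
  loop is removed; a join contracts an edge of an optimal cover.\<close>
lemma mgreedy_run_dist_bound:
  assumes "mgreedy_run S T R" "substring_free V" "greedy_inv V S" "finite T" "\<forall>t\<in>T. anchored V t"
  shows "finite R \<and> (\<forall>t\<in>R. anchored V t) \<and> (\<Sum>t\<in>R. dist t t) \<le> (\<Sum>t\<in>T. dist t t) + wCYC S"
  using assms
proof (induction S T R rule: mgreedy_run.induct)
  case (loop S x T R)
  have "x \<in> verts S"
    using loop.hyps(2) by (simp add: max_pair_def cand_iff)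
  then have "finite R \<and> (\<forall>t\<in>R. anchored V t) \<and>
      (\<Sum>t\<in>R. dist t t) \<le> (\<Sum>t\<in>insert x T. dist t t) + wCYC (S - {x, rc x})"
    using loop greedy_inv_Diff greedy_inv_anchored by simp
  moreover have "(\<Sum>t\<in>insert x T. dist t t) \<le> (\<Sum>t\<in>T. dist t t) + dist x x"
    using loop.prems(3) by (simp add: sum.insert_if)
  moreover have "wCYC (S - {x, rc x}) + dist x x \<le> wCYC S"
    using wCYC_remove_self_loop greedy_inv_finite loop by blast
  ultimately show ?case
    by simp
next
  case (join S x y T R)
  interpret greedy_join V S x y
    using join by unfold_locales auto
  show ?case
    using join.IH join.prems greedy_inv_join_step wCYC_join_step
    unfolding join_step_def by fastforce
qed simp

section \<open>Superstrings\<close>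

lemma OPT_le: "covers_rc U s \<Longrightarrow> OPT U \<le> length s"
  unfolding OPT_def by (rule Least_le) blast

lemma OPT_attained: "finite U \<Longrightarrow> \<exists>s. covers_rc U s \<and> length s = OPT U"
proof -
  assume "finite U"
  then obtain l where l: "set l = U"
    using finite_list by blast
  have "sublist x (concat l)" if x: "x \<in> set l" for x
  proof -
    obtain l1 l2 where "l = l1 @ x # l2"
      using split_list[OF x] by blast
    then show ?thesis
      by simp
  qed
  then have "covers_rc U (concat l)"
    using l by (simp add: covers_rc_def)
  then have "\<exists>n s. length s = n \<and> covers_rc U s"
    by blast
  then have "\<exists>s. length s = OPT U \<and> covers_rc U s"
    unfolding OPT_def by (rule LeastI_ex)
  then show ?thesis
    by blast
qed

text \<open>A block \<open>(e, r, N)\<close> inserts \<open>N\<close> at position \<open>e\<close> of \<open>u\<close>, right after an occurrence of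
  \<open>r\<close>. Since \<open>r @ N\<close> ends with \<open>r\<close> again, the occurrence of \<open>r\<close> survives the insertion, and
  inserting at positions in decreasing order keeps all the blocks intact.\<close>
fun insert_blocks :: "dna \<Rightarrow> (nat \<times> dna \<times> dna) list \<Rightarrow> dna" where
  "insert_blocks u [] = u"
| "insert_blocks u ((e, r, N) # L) = insert_blocks (take e u) L @ N @ drop e u"

definition insertion_block :: "dna set \<Rightarrow> dna \<Rightarrow> nat \<times> dna \<times> dna \<Rightarrow> bool" where
  "insertion_block F u b \<longleftrightarrow>
    (case b of (e, r, N) \<Rightarrow> r \<in> F \<and> e \<le> length u \<and> suffix r (take e u) \<and> suffix r (r @ N))"

definition valid_blocks :: "dna set \<Rightarrow> dna \<Rightarrow> (nat \<times> dna \<times> dna) list \<Rightarrow> bool" where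
  "valid_blocks F u L \<longleftrightarrow> (\<forall>b\<in>set L. insertion_block F u b) \<and> sorted_wrt (\<lambda>a b. fst b \<le> fst a) L"

lemma valid_blocks_Cons:
  assumes "valid_blocks F u ((e, r, N) # L)"
  shows "r \<in> F" "e \<le> length u" "suffix r (take e u)" "suffix r (r @ N)"
    and "valid_blocks F (take e u) L"
proof -
  show "r \<in> F" "e \<le> length u" "suffix r (take e u)" "suffix r (r @ N)"
    using assms by (auto simp: valid_blocks_def insertion_block_def)
  have "insertion_block F (take e u) b" if "b \<in> set L" for b
  proof (cases b)
    case (fields e' r' N')
    then have "insertion_block F u (e', r', N')" "e' \<le> e"
      using assms that by (auto simp: valid_blocks_def)
    then show ?thesis
      using fields by (auto simp: insertion_block_def min_def)
  qed
  then show "valid_blocks F (take e u) L"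
    using assms by (simp add: valid_blocks_def)
qed

lemma suffix_insert_blocks:
  assumes "substring_free F" "valid_blocks F u L" "z \<in> F" "suffix z u"
  shows "suffix z (insert_blocks u L)"
  using assms(2-4)
proof (induction L arbitrary: u z)
  case (Cons b L)
  obtain e r N where b: "b = (e, r, N)"
    by (metis prod_cases3)
  note v = valid_blocks_Cons[OF Cons.prems(1)[unfolded b]]
  have "suffix z (take e u @ drop e u)"
    using Cons.prems(3) by simp
  then consider "suffix z (drop e u)" | P where "z = P @ drop e u" "suffix P (take e u)"
    unfolding suffix_append by blast
  then show ?case
  proof cases
    case 1
    then show ?thesis
      by (auto simp: b suffix_def)
  next
    case 2
    from suffix_same_cases[OF 2(2) v(3)] have "suffix P r"
    proof (elim disjE)
      assume "suffix r P"
      then have "sublist r z"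
        using 2(1) by (metis suffix_imp_sublist sublist_append_rightI sublist_order.order_trans)
      then have "r = z"
        using substring_freeD[OF assms(1) v(1) Cons.prems(2)] by blast
      moreover have "length r \<le> length P"
        using \<open>suffix r P\<close> by (rule suffix_length_le)
      ultimately have "P = r"
        using 2(1) by simp
      then show "suffix P r"
        by simp
    qed
    moreover have "suffix r (insert_blocks (take e u) L @ N)"
      using Cons.IH[OF v(5) v(1) v(3)] v(4) by (auto simp: suffix_def)
    ultimately show ?thesis
      using 2(1) by (auto simp: b suffix_def)
  qed
qed simp

lemma sublist_insert_blocks:
  assumes "substring_free F" "valid_blocks F u L" "(e, r, N) \<in> set L"
  shows "sublist (r @ N) (insert_blocks u L)"
  using assms(2,3)
proof (induction L arbitrary: u)
  case (Cons b L)
  obtain e' r' N' where b: "b = (e', r', N')"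
    by (metis prod_cases3)
  note v = valid_blocks_Cons[OF Cons.prems(1)[unfolded b]]
  show ?case
  proof (cases "(e, r, N) = b")
    case True
    obtain W where "insert_blocks (take e' u) L = W @ r'"
      using suffix_insert_blocks[OF assms(1) v(5) v(1) v(3)] by (auto simp: suffix_def)
    then show ?thesis
      using True b by (simp add: sublist_def) (metis append_assoc)
  next
    case False
    then have "sublist (r @ N) (insert_blocks (take e' u) L)"
      using Cons v(5) by simp
    then show ?thesis
      by (simp add: b sublist_def) (metis append_assoc)
  qed
qed simp

lemma length_insert_blocks:
  "valid_blocks F u L \<Longrightarrow> length (insert_blocks u L) = length u + (\<Sum>(e, r, N)\<leftarrow>L. length N)"
proof (induction L arbitrary: u)
  case (Cons b L)
  obtain e r N where b: "b = (e, r, N)"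
    by (metis prod_cases3)
  then show ?case
    using Cons.IH valid_blocks_Cons[OF Cons.prems[unfolded b]] by simp
qed simp

text \<open>The self-overlap of \<open>t\<close>, being shorter than \<open>v\<close>, is also an overlap of \<open>t\<close> with \<open>v\<close>.\<close>
lemma length_merge_anchor:
  assumes v: "prefix v t" and short: "t \<noteq> [] \<Longrightarrow> ov t t < length v"
  shows "length (merge t v) \<le> length v + dist t t"
proof -
  have "ov t t \<le> ov t v"
  proof (cases "ov t t = 0")
    case False
    then have p: "is_overlap t t (ov t t)"
      by (rule is_overlap_ov)
    have "t \<noteq> []"
      using False ov_le_length1[of t t] by auto
    then have "ov t t < length v"
      by (rule short)
    moreover have "take (ov t t) t = take (ov t t) v"
      using take_prefix_eq[OF v] \<open>ov t t < length v\<close> by simp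
    ultimately have "is_overlap t v (ov t t)"
      using p unfolding is_overlap_def by simp
    then show ?thesis
      by (rule ov_maximal)
  qed simp
  moreover have "length (merge t v) + ov t v = length t + length v"
    using length_merge[of t v] ov_le_length2[of t v] by simp
  ultimately show ?thesis
    using dist_add_ov[of t t] by linarith
qed

lemma block_of_occurrence:
  assumes "sublist r u" "prefix r Z" "suffix r Z"
  shows "\<exists>e N. e \<le> length u \<and> suffix r (take e u) \<and> suffix r (r @ N) \<and> r @ N = Z"
proof -
  obtain p s where "u = p @ r @ s"
    using assms(1) by (auto simp: sublist_def)
  moreover obtain N where "Z = r @ N"
    using assms(2) by (auto simp: prefix_def)
  moreover have "suffix r (take (length p + length r) u)"
    using \<open>u = p @ r @ s\<close> by (simp add: suffix_appendI)
  ultimately show ?thesis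
    using assms(3) by (intro exI[of _ "length p + length r"] exI[of _ N]) simp
qed

lemma anchored_block:
  assumes cov: "covers_rc S u" and t: "anchored (verts S) t"
  shows "\<exists>e r N. insertion_block (verts S) u (e, r, N) \<and>
    (sublist t (r @ N) \<or> sublist (rc t) (r @ N)) \<and> length N \<le> dist t t"
proof -
  obtain v where v: "v \<in> verts S" "prefix v t" "t \<noteq> [] \<longrightarrow> ov t t < length v"
    using t by (auto simp: anchored_def)
  define Z where "Z = merge t v"
  have pZ: "prefix v Z"
    using prefix_merge[of t v] v(2) prefix_order.trans by (auto simp: Z_def)
  have sZ: "suffix v Z" and tZ: "sublist t Z"
    using suffix_merge[of v t] prefix_imp_sublist[OF prefix_merge] by (auto simp: Z_def)
  have lZ: "length Z \<le> length v + dist t t"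
    using length_merge_anchor[OF v(2)] v(3) by (simp add: Z_def)
  have "sublist v u \<or> sublist (rc v) u"
    using cov v(1) by (auto simp: covers_rc_def verts_def)
  then show ?thesis
  proof
    assume "sublist v u"
    then obtain e N where "e \<le> length u" "suffix v (take e u)" "suffix v (v @ N)"
      and vN: "v @ N = Z"
      using block_of_occurrence pZ sZ by blast
    moreover have "length N \<le> dist t t"
      using lZ vN by auto
    ultimately show ?thesis
      using v(1) tZ
      by (intro exI[of _ e] exI[of _ v] exI[of _ N]) (auto simp: insertion_block_def)
  next
    assume "sublist (rc v) u"
    then obtain e N where "e \<le> length u" "suffix (rc v) (take e u)" "suffix (rc v) (rc v @ N)"
      and vN: "rc v @ N = rc Z"
      using block_of_occurrence suffix_imp_prefix_rc[OF sZ] prefix_imp_suffix_rc[OF pZ] by blast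
    moreover have "length N \<le> dist t t"
      using lZ arg_cong[OF vN, of length] by simp
    moreover have "sublist (rc t) (rc Z)"
      using sublist_rc tZ .
    ultimately show ?thesis
      using rc_in_verts[OF v(1)]
      by (intro exI[of _ e] exI[of _ "rc v"] exI[of _ N]) (auto simp: insertion_block_def)
  qed
qed

lemma valid_blocks_sort:
  assumes "\<forall>b\<in>set L. insertion_block F u b"
  shows "valid_blocks F u (rev (sort_key fst L))"
proof -
  have "sorted (map fst (sort_key fst L))"
    by simp
  then have "sorted_wrt (\<lambda>a b. fst a \<le> fst b) (sort_key fst L)"
    by (simp add: sorted_map)
  then show ?thesis
    using assms by (simp add: valid_blocks_def sorted_wrt_rev)
qed

text \<open>Each output \<open>t\<close> is obtained from its anchor \<open>v\<close>, an input string, by inserting at most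
  \<open>dist t t\<close> letters after an occurrence of \<open>v\<close> (or of \<open>rc v\<close>) in a superstring of the input.\<close>
lemma OPT_le_add_dist:
  assumes cov: "covers_rc S u" and sf: "substring_free (verts S)" and fin: "finite T"
    and anch: "\<forall>t\<in>T. anchored (verts S) t"
  shows "OPT T \<le> length u + (\<Sum>t\<in>T. dist t t)"
proof -
  define good_block where "good_block t b \<longleftrightarrow> insertion_block (verts S) u b \<and>
      (case b of (e, r, N) \<Rightarrow> (sublist t (r @ N) \<or> sublist (rc t) (r @ N)) \<and> length N \<le> dist t t)"
    for t b
  have "\<forall>t\<in>T. \<exists>b. good_block t b"
    using anchored_block[OF cov] anch unfolding good_block_def by fastforce
  then obtain f where f: "\<forall>t\<in>T. good_block t (f t)"
    by (blast dest: bchoice)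
  obtain l where l: "set l = T" "distinct l"
    using finite_distinct_list[OF fin] by blast
  define L where "L = rev (sort_key fst (map f l))"
  have mset_L: "mset L = mset (map f l)"
    by (simp add: L_def)
  have L: "valid_blocks (verts S) u L"
    unfolding L_def using f l by (intro valid_blocks_sort) (auto simp: good_block_def)
  have "covers_rc T (insert_blocks u L)"
    unfolding covers_rc_def
  proof
    fix t assume "t \<in> T"
    obtain e r N where ft: "f t = (e, r, N)"
      by (metis prod_cases3)
    have "f t \<in> set L"
      using \<open>t \<in> T\<close> l by (simp add: L_def)
    then have "sublist (r @ N) (insert_blocks u L)"
      unfolding ft by (rule sublist_insert_blocks[OF sf L])
    then show "sublist t (insert_blocks u L) \<or> sublist (rc t) (insert_blocks u L)"
      using f \<open>t \<in> T\<close> ft sublist_order.order_trans by (fastforce simp: good_block_def)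
  qed
  then have "OPT T \<le> length (insert_blocks u L)"
    by (rule OPT_le)
  also have "\<dots> = length u + (\<Sum>(e, r, N)\<leftarrow>L. length N)"
    by (rule length_insert_blocks[OF L])
  also have "(\<Sum>(e, r, N)\<leftarrow>L. length N) = (\<Sum>(e, r, N)\<leftarrow>map f l. length N)"
    using mset_L by (metis mset_map sum_mset_sum_list)
  also have "\<dots> = (\<Sum>t\<in>T. case f t of (e, r, N) \<Rightarrow> length N)"
    using l by (simp add: sum_list_distinct_conv_sum_set)
  also have "\<dots> \<le> (\<Sum>t\<in>T. dist t t)"
    using f by (intro sum_mono) (auto simp: good_block_def split: prod.splits)
  finally show ?thesis
    by simp
qed

lemma occurs_at_same_position:
  assumes sf: "substring_free F" and ab: "a \<in> F" "b \<in> F"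
    and oa: "occurs_at a u p" and ob: "occurs_at b u p"
  shows "a = b"
proof -
  have "prefix a b \<or> prefix b a"
    using oa ob unfolding occurs_at_def
    by (metis nat_le_linear prefix_order.eq_iff take_is_prefix take_prefix_eq)
  then show ?thesis
    using substring_freeD[OF sf] ab prefix_imp_sublist by metis
qed

text \<open>The two occurrences share \<open>pa + length a - pb\<close> letters, which form an overlap of \<open>a\<close>
  with \<open>b\<close> unless one of the strings contains the other.\<close>
lemma dist_add_le_occurs_at:
  assumes sf: "substring_free F" and ab: "a \<in> F" "b \<in> F" "a \<noteq> b"
    and oa: "occurs_at a u pa" and ob: "occurs_at b u pb" and le: "pa \<le> pb"
  shows "dist a b + pa \<le> pb"
proof -
  have ea: "a = take (length a) (drop pa u)" and eb: "b = take (length b) (drop pb u)"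
    using oa ob by (simp_all add: occurs_at_def)
  have da: "drop (pb - pa) a = take (length a - (pb - pa)) (drop pb u)"
    using le by (subst ea) (simp add: drop_take)
  have "pa \<noteq> pb"
    using occurs_at_same_position[OF sf ab(1,2) oa] ob ab(3) by blast
  show ?thesis
  proof (cases "pa + length a \<le> pb")
    case True
    then show ?thesis
      by (simp add: dist_def)
  next
    case False
    define k where "k = pa + length a - pb"
    have k: "0 < k" "k < length a" "length a - k = pb - pa" "length a - (pb - pa) = k"
      using False \<open>pa \<noteq> pb\<close> le k_def by auto
    have "k < length b"
    proof (rule ccontr)
      assume "\<not> k < length b"
      then have "take (length b) (drop (pb - pa) a) = b"
        using da eb k(4) by (simp add: min_def)
      then have "sublist b a"
        by (metis sublist_take sublist_drop sublist_order.order_trans)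
      then show False
        using substring_freeD[OF sf ab(2,1)] ab(3) by blast
    qed
    moreover have "take k b = take k (drop pb u)"
      using arg_cong[OF eb, of "take k"] \<open>k < length b\<close> by (simp add: min_def)
    ultimately have "is_overlap a b k"
      using k da by (simp add: is_overlap_def)
    then show ?thesis
      using ov_maximal[of a b k] k by (simp add: dist_def)
  qed
qed

lemma cycle_weight_le_sorted_occurrences:
  assumes sf: "substring_free F" and l: "set l \<subseteq> F" "distinct l" "l \<noteq> []"
    and occ: "\<forall>x\<in>set l. occurs_at x u (pos x)" and sorted: "sorted (map pos l)"
  shows "cycle_weight l \<le> length u"
proof -
  obtain m where m: "length l = Suc m"
    using l(3) by (cases l) auto
  have cw: "cycle_weight l = (\<Sum>i<m. dist (l ! i) (l ! Suc i)) + dist (l ! m) (l ! 0)"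
    unfolding cycle_weight_def m by (simp add: mod_Suc)
  have tele: "(\<Sum>i<k. dist (l ! i) (l ! Suc i)) + pos (l ! 0) \<le> pos (l ! k)" if "k \<le> m" for k
    using that
  proof (induction k)
    case (Suc k)
    then have k: "k < length l" "Suc k < length l"
      using m by auto
    have "dist (l ! k) (l ! Suc k) + pos (l ! k) \<le> pos (l ! Suc k)"
      using k l occ sorted
      by (intro dist_add_le_occurs_at[OF sf])
        (auto simp: nth_eq_iff_index_eq sorted_iff_nth_mono)
    then show ?case
      using Suc by simp
  qed simp
  have "pos (l ! m) + length (l ! m) \<le> length u"
    using occ m by (simp add: occurs_at_def)
  then show ?thesis
    using cw tele[of m] by (simp add: dist_def)
qed

lemma rc_transversal_in_superstring:
  assumes "finite S" "covers_rc S u"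
  shows "\<exists>U. finite U \<and> rc_transversal S U \<and> (\<forall>x\<in>U. sublist x u)"
proof -
  define rep where "rep s = (SOME x. x \<in> {s, rc s} \<and> sublist x u)" for s
  have rep: "rep s \<in> {s, rc s}" "sublist (rep s) u" if "s \<in> S" for s
    using someI_ex[of "\<lambda>x. x \<in> {s, rc s} \<and> sublist x u"] assms(2) that
    unfolding rep_def covers_rc_def by auto
  have rep_eq: "rep s = rep s'" if "x \<in> {s, rc s}" "x \<in> {s', rc s'}" for s s' x
  proof -
    have "{s, rc s} = {s', rc s'}"
      using that by auto
    then show ?thesis
      unfolding rep_def by simp
  qed
  have "rc_transversal S (rep ` S)"
    unfolding rc_transversal_def
  proof (intro conjI ballI impI)
    show "rep ` S \<subseteq> verts S"
      using rep(1) by (fastforce simp: verts_def)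
    show "s \<in> rep ` S \<or> rc s \<in> rep ` S" if "s \<in> S" for s
      using rep(1)[OF that] imageI[OF that, of rep] by auto
  next
    fix x assume "x \<in> rep ` S" "rc x \<in> rep ` S"
    then obtain s s' where s: "s \<in> S" "x = rep s" and s': "s' \<in> S" "rc x = rep s'"
      by blast
    have "rc x \<in> {s, rc s}"
      using rep(1)[OF s(1)] s(2) by auto
    moreover have "rc x \<in> {s', rc s'}"
      using rep(1)[OF s'(1)] s'(2) by simp
    ultimately have "rep s' = rep s"
      by (rule rep_eq[rotated])
    then show "rc x = x"
      using s(2) s'(2) by simp
  qed
  then show ?thesis
    using rep(2) assms(1) by blast
qed

lemma wCYC_le_OPT:
  assumes fin: "finite S" and sf: "substring_free (verts S)"
  shows "wCYC S \<le> OPT S"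
proof (cases "S = {}")
  case True
  then have "is_cycle_cover S []"
    by (simp add: is_cycle_cover_iff rc_transversal_def)
  then show ?thesis
    using wCYC_le by fastforce
next
  case False
  obtain u where cov: "covers_rc S u" and lu: "length u = OPT S"
    using OPT_attained[OF fin] by blast
  obtain U where U: "finite U" "rc_transversal S U" "\<forall>x\<in>U. sublist x u"
    using rc_transversal_in_superstring[OF fin cov] by blast
  define pos where "pos x = (LEAST p. occurs_at x u p)" for x
  have pos: "occurs_at x u (pos x)" if "x \<in> U" for x
    unfolding pos_def using U(3) that sublist_iff_occurs_at by (metis LeastI_ex)
  obtain l0 where l0: "set l0 = U" "distinct l0"
    using finite_distinct_list[OF U(1)] by blast
  define l where "l = sort_key pos l0"
  have l: "set l = U" "distinct l" "sorted (map pos l)"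
    using l0 by (simp_all add: l_def)
  have "U \<noteq> {}"
    using U(2) False by (auto simp: rc_transversal_def)
  then have cv: "is_cycle_cover S [l]"
    using l U(2) by (auto simp: is_cycle_cover_iff)
  have "cycle_weight l \<le> length u"
    using l U(2) pos \<open>U \<noteq> {}\<close>
    by (intro cycle_weight_le_sorted_occurrences[OF sf]) (auto simp: rc_transversal_def)
  then show ?thesis
    using wCYC_le[OF cv] lu by simp
qed

theorem lemma15:
  fixes S T :: "dna set"
  assumes "scs_rc_instance S"
    and "mgreedy_rc S T"
  shows "OPT T \<le> OPT S + wCYC S \<and> OPT S + wCYC S \<le> 2 * OPT S"
proof -
  have fin: "finite S" and sf: "substring_free (verts S)"
    using assms(1) by (simp_all add: scs_rc_instance_def substring_free_def)
  have run: "mgreedy_run S {} T"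
    using assms(2) by (simp add: mgreedy_rc_def)
  have T: "finite T" "\<forall>t\<in>T. anchored (verts S) t" "(\<Sum>t\<in>T. dist t t) \<le> wCYC S"
    using mgreedy_run_dist_bound[OF run sf greedy_inv_init[OF fin sf]] by simp_all
  obtain u where "covers_rc S u" "length u = OPT S"
    using OPT_attained[OF fin] by blast
  then have "OPT T \<le> OPT S + wCYC S"
    using OPT_le_add_dist[OF _ sf T(1,2)] T(3) by fastforce
  moreover have "wCYC S \<le> OPT S"
    by (rule wCYC_le_OPT[OF fin sf])
  ultimately show ?thesis
    by simp
qed

end
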